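(* Let $R=k[x_1,\dots,x_n]$, let $f_1,\dots,f_m\in R$, $\mathbf f=(f_1,\dots,f_m)$, and $I=\langle f_1,\dots,f_m\rangle$. Fix any term order on $R$ and any term order on the free module $R^m$, and run the algorithm AGC (described in the context) on the input $f_1^{[\mathbf e_1]},\dots,f_m^{[\mathbf e_m]}$, using a partial order $<$ on the current set $G$ for the generalized rewritable criterion. If the algorithm AGC terminates after finitely many steps and the partial order $<$ is admissible, then the set $G$ it returns is a labeled Gröbner basis for $I$.
   Context: Notation: a "polynomial in $I$" is a pair written $f^{[\mathbf u]}$ with $\mathbf u=(p_1,\dots,p_m)\in R^m$ and $f=\mathbf u\cdot\mathbf f=\sum p_if_i$; two such pairs are equal iff both components are equal. Operations: $f^{[\mathbf u]}+g^{[\mathbf v]}=(f+g)^{[\mathbf u+\mathbf v]}$ and $ct(f^{[\mathbf u]})=(ctf)^{[ct\mathbf u]}$ for $c\in k$, $t$ a power product. $\mathbf e_i$ is the $i$-th unit vector of $R^m$. $\mathrm{lpp}$ and $\mathrm{lc}$ denote leading power product and leading coefficient (in $R$ w.r.t. the term order on $R$, in $R^m$ w.r.t. the term order on $R^m$); both orders are denoted $\prec$; convention $\mathrm{lpp}(0)=0\prec$ every nonzero power product. The signature of $f^{[\mathbf u]}$ is $\mathrm{lpp}(\mathbf u)$. A module monomial $x^\alpha\mathbf e_i$ divides $x^\beta\mathbf e_j$ iff $i=j$ and $x^\alpha\mid x^\beta$. A polynomial $0^{[\mathbf u]}$ is called a syzygy polynomial. Critical pair: for $f^{[\mathbf u]},g^{[\mathbf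 v]}$ with $f,g\neq0$, let $t=\mathrm{lcm}(\mathrm{lpp}(f),\mathrm{lpp}(g))$, $t_f=t/\mathrm{lpp}(f)$, $t_g=t/\mathrm{lpp}(g)$; if $\mathrm{lpp}(t_f\mathbf u)\succeq\mathrm{lpp}(t_g\mathbf v)$, the 4-tuple $(t_f,f^{[\mathbf u]},t_g,g^{[\mathbf v]})$ is the critical pair of $f^{[\mathbf u]}$ and $g^{[\mathbf v]}$, and its S-polynomial is $t_f(f^{[\mathbf u]})-c\,t_g(g^{[\mathbf v]})$ with $c=\mathrm{lc}(f)/\mathrm{lc}(g)$. The critical pair is regular if $\mathrm{lpp}(t_f\mathbf u)\succ\mathrm{lpp}(t_g\mathbf v)$. Partial order: a relation $<$ on the current set $G$ that is irreflexive, transitive, and such that $a<b$ does not imply $b<a$; it is updated whenever elements are added to $G$. Generalized rewritable: for $f^{[\mathbf u]}\in B$ with $f\ne0$ and a power product $t$, $t(f^{[\mathbf u]})$ is gen-rewritable by $B$ if there exists $g^{[\mathbf v]}\in B$ with $\mathrm{lpp}(\mathbf v)\mid\mathrm{lpp}(t\mathbf u)$ and $g^{[\mathbf v]}<f^{[\mathbf u]}$. A critical pair $(t_f,f^{[\mathbf u]},t_g,g^{[\mathbf v]})$ is gen-rewritable by $B$ if $t_f(f^{[\mathbf u]})$ or $t_g(g^{[\mathbf v]})$ is. One-side reduction: $f^{[\mathbf u]}$ is reducible by $h^{[\mathbf w]}\in G$ ($f,h\ne 0$) if $\mathrm{lpp}(h)\mid\mathrm{lpp}(f)$ and $\mathrm{lpp}(t\mathbf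 w)\prec\mathrm{lpp}(\mathbf u)$ where $t=\mathrm{lpp}(f)/\mathrm{lpp}(h)$; a one-step reduction replaces $f^{[\mathbf u]}$ by $f^{[\mathbf u]}-ct(h^{[\mathbf w]})$, $c=\mathrm{lc}(f)/\mathrm{lc}(h)$. "$f^{[\mathbf u]}$ is reduced to $f'^{[\mathbf u']}$ by $G$" means $f'^{[\mathbf u']}$ is obtained by finitely many one-step reductions and is not reducible by $G$. Algorithm AGC: set $G:=\{f_i^{[\mathbf e_i]}:1\le i\le m\}\cup\{0^{[f_j\mathbf e_i-f_i\mathbf e_j]}:1\le i<j\le m\}$ and CPairs := the set of critical pairs of elements of $G$. While CPairs is nonempty: pick any critical pair $(t_f,f^{[\mathbf u]},t_g,g^{[\mathbf v]})$ in CPairs and remove it; if it is regular and not gen-rewritable by $G$, reduce its S-polynomial by $G$ to $h^{[\mathbf w]}$, add to CPairs the critical pairs of $h^{[\mathbf w]}$ with elements of $G$, and set $G:=G\cup\{h^{[\mathbf w]}\}\cup\{0^{[h\mathbf e_i-f_i\mathbf w]}:1\le i\le m\}$ (updating $<$). Return $G$. Admissible: the partial order $<$ is admissible if whenever the algorithm reduces the S-polynomial of a critical pair $(t_f,f^{[\mathbf u]},t_g,g^{[\mathbf v]})$ of $G$ to $h^{[\mathbf w]}$, after updating $<$ for $G\cup\{h^{[\mathbf w]}\}$ one has $h^{[\mathbf w]}<f^{[\mathbf u]}$. Labeled Gröbner basis: a finite set $G$ of polynomials in $I$ such that for every $f^{[\mathbf u]}$ in $I$ with $f\ne0$ there is $g^{[\mathbf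 v]}\in G$ with $\mathrm{lpp}(g)\mid\mathrm{lpp}(f)$ and $\mathrm{lpp}(t\mathbf v)\preceq\mathrm{lpp}(\mathbf u)$, where $t=\mathrm{lpp}(f)/\mathrm{lpp}(g)$. *)

theory Defs
  imports Main "HOL-Library.Poly_Mapping"
begin

text \<open>
  Power products in the variables of the finite type 'x are exponent vectors
  (x =>0 nat); polynomials of R = k[x] are finitely supported maps from power products to k.
  Generators f_1..f_m are indexed 0..m-1 (fs :: nat \<Rightarrow> poly, only i < m used).
  Elements of R^m are functions nat \<Rightarrow> poly vanishing at indices \<ge> m.
  A module monomial x^a e_i is the pair (a, i).
  A term order on R is given as a relation ord (meaning \<preceq>), a term order on R^m
  as a relation mo on module monomials (meaning \<preceq>).
\<close>

type_synonym 'x pp = "'x \<Rightarrow>\<^sub>0 nat"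
type_synonym ('x, 'k) poly = "'x pp \<Rightarrow>\<^sub>0 'k"
type_synonym ('x, 'k) vec = "nat \<Rightarrow> ('x, 'k) poly"
type_synonym ('x, 'k) lpoly = "('x, 'k) poly \<times> ('x, 'k) vec"
type_synonym ('x, 'k) cpair = "'x pp \<times> ('x, 'k) lpoly \<times> 'x pp \<times> ('x, 'k) lpoly"

definition pp_dvd :: "'x pp \<Rightarrow> 'x pp \<Rightarrow> bool" where
  "pp_dvd s t \<longleftrightarrow> (\<forall>x. Poly_Mapping.lookup s x \<le> Poly_Mapping.lookup t x)"

definition pp_div :: "'x pp \<Rightarrow> 'x pp \<Rightarrow> 'x pp" where
  "pp_div t s = t - s"

definition pp_lcm :: "'x pp \<Rightarrow> 'x pp \<Rightarrow> 'x pp" where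
  "pp_lcm s t = s + (t - s)"

definition term_order :: "('x pp \<Rightarrow> 'x pp \<Rightarrow> bool) \<Rightarrow> bool" where
  "term_order ord \<longleftrightarrow>
     (\<forall>s. ord s s) \<and>
     (\<forall>s t. ord s t \<and> ord t s \<longrightarrow> s = t) \<and>
     (\<forall>s t u. ord s t \<and> ord t u \<longrightarrow> ord s u) \<and>
     (\<forall>s t. ord s t \<or> ord t s) \<and>
     (\<forall>t. ord 0 t) \<and>
     (\<forall>s t u. ord s t \<longrightarrow> ord (s + u) (t + u))"

definition module_term_order :: "nat \<Rightarrow> ('x pp \<times> nat \<Rightarrow> 'x pp \<times> nat \<Rightarrow> bool) \<Rightarrow> bool" where
  "module_term_order m mo \<longleftrightarrow>
     (\<forall>a. snd a < m \<longrightarrow> mo a a) \<and>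
     (\<forall>a b. snd a < m \<and> snd b < m \<and> mo a b \<and> mo b a \<longrightarrow> a = b) \<and>
     (\<forall>a b c. snd a < m \<and> snd b < m \<and> snd c < m \<and> mo a b \<and> mo b c \<longrightarrow> mo a c) \<and>
     (\<forall>a b. snd a < m \<and> snd b < m \<longrightarrow> mo a b \<or> mo b a) \<and>
     (\<forall>t i. i < m \<longrightarrow> mo (0, i) (t, i)) \<and>
     (\<forall>s i t j u. i < m \<and> j < m \<and> mo (s, i) (t, j) \<longrightarrow> mo (s + u, i) (t + u, j))"

text \<open>leading power product of a nonzero polynomial (only used for f \<noteq> 0)\<close>
definition lpp :: "('x pp \<Rightarrow> 'x pp \<Rightarrow> bool) \<Rightarrow> ('x, 'k::zero) poly \<Rightarrow> 'x pp" where
  "lpp ord f = (THE t. t \<in> Poly_Mapping.keys f \<and> (\<forall>s\<in>Poly_Mapping.keys f. ord s t))"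

definition lc :: "('x pp \<Rightarrow> 'x pp \<Rightarrow> bool) \<Rightarrow> ('x, 'k::zero) poly \<Rightarrow> 'k" where
  "lc ord f = Poly_Mapping.lookup f (lpp ord f)"

definition msupp :: "nat \<Rightarrow> ('x, 'k::zero) vec \<Rightarrow> ('x pp \<times> nat) set" where
  "msupp m u = {(t, i). i < m \<and> t \<in> Poly_Mapping.keys (u i)}"

text \<open>lpp of a module element; None encodes lpp(0) = 0, below every module monomial\<close>
definition sig :: "nat \<Rightarrow> ('x pp \<times> nat \<Rightarrow> 'x pp \<times> nat \<Rightarrow> bool) \<Rightarrow> ('x, 'k::zero) vec
    \<Rightarrow> ('x pp \<times> nat) option" where
  "sig m mo u = (if msupp m u = {} then None
                 else Some (THE a. a \<in> msupp m u \<and> (\<forall>b\<in>msupp m u. mo b a)))"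

definition sig_less :: "('x pp \<times> nat \<Rightarrow> 'x pp \<times> nat \<Rightarrow> bool) \<Rightarrow> ('x pp \<times> nat) option
    \<Rightarrow> ('x pp \<times> nat) option \<Rightarrow> bool" where
  "sig_less mo a b = (case (a, b) of
      (None, None) \<Rightarrow> False
    | (None, Some _) \<Rightarrow> True
    | (Some _, None) \<Rightarrow> False
    | (Some x, Some y) \<Rightarrow> mo x y \<and> x \<noteq> y)"

definition mdvd :: "'x pp \<times> nat \<Rightarrow> 'x pp \<times> nat \<Rightarrow> bool" where
  "mdvd a b \<longleftrightarrow> snd a = snd b \<and> pp_dvd (fst a) (fst b)"

definition vmult :: "'x pp \<Rightarrow> ('x, 'k::comm_ring_1) vec \<Rightarrow> ('x, 'k) vec" where
  "vmult t u = (\<lambda>i. Poly_Mapping.single t 1 * u i)"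

definition lscale :: "'k::comm_ring_1 \<Rightarrow> 'x pp \<Rightarrow> ('x, 'k) lpoly \<Rightarrow> ('x, 'k) lpoly" where
  "lscale c t a = (Poly_Mapping.single t c * fst a, \<lambda>i. Poly_Mapping.single t c * snd a i)"

definition lsub :: "('x, 'k::comm_ring_1) lpoly \<Rightarrow> ('x, 'k) lpoly \<Rightarrow> ('x, 'k) lpoly" where
  "lsub a b = (fst a - fst b, \<lambda>i. snd a i - snd b i)"

definition is_vec :: "nat \<Rightarrow> ('x, 'k::zero) vec \<Rightarrow> bool" where
  "is_vec m u \<longleftrightarrow> (\<forall>i\<ge>m. u i = 0)"

definition dot :: "nat \<Rightarrow> ('x, 'k::comm_ring_1) vec \<Rightarrow> ('x, 'k) vec \<Rightarrow> ('x, 'k) poly" where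
  "dot m u fs = (\<Sum>i<m. u i * fs i)"

text \<open>f^[u] is a polynomial in I = <f_1..f_m>\<close>
definition in_I :: "nat \<Rightarrow> ('x, 'k::comm_ring_1) vec \<Rightarrow> ('x, 'k) lpoly \<Rightarrow> bool" where
  "in_I m fs a \<longleftrightarrow> is_vec m (snd a) \<and> fst a = dot m (snd a) fs"

definition unitv :: "nat \<Rightarrow> ('x, 'k::comm_ring_1) vec" where
  "unitv i = (\<lambda>k. if k = i then 1 else 0)"

definition is_cpair :: "('x pp \<Rightarrow> 'x pp \<Rightarrow> bool) \<Rightarrow> nat \<Rightarrow> ('x pp \<times> nat \<Rightarrow> 'x pp \<times> nat \<Rightarrow> bool)
    \<Rightarrow> ('x, 'k::comm_ring_1) lpoly \<Rightarrow> ('x, 'k) lpoly \<Rightarrow> ('x, 'k) cpair \<Rightarrow> bool" where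
  "is_cpair ord m mo a b p \<longleftrightarrow>
     fst a \<noteq> 0 \<and> fst b \<noteq> 0 \<and>
     (let t = pp_lcm (lpp ord (fst a)) (lpp ord (fst b));
          tf = pp_div t (lpp ord (fst a));
          tg = pp_div t (lpp ord (fst b))
      in p = (tf, a, tg, b) \<and>
         \<not> sig_less mo (sig m mo (vmult tf (snd a))) (sig m mo (vmult tg (snd b))))"

definition cpairs_of :: "('x pp \<Rightarrow> 'x pp \<Rightarrow> bool) \<Rightarrow> nat \<Rightarrow> ('x pp \<times> nat \<Rightarrow> 'x pp \<times> nat \<Rightarrow> bool)
    \<Rightarrow> ('x, 'k::comm_ring_1) lpoly set \<Rightarrow> ('x, 'k) lpoly set \<Rightarrow> ('x, 'k) cpair set" where
  "cpairs_of ord m mo A B = {p. \<exists>a\<in>A. \<exists>b\<in>B. is_cpair ord m mo a b p}"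

definition spoly :: "('x pp \<Rightarrow> 'x pp \<Rightarrow> bool) \<Rightarrow> ('x, 'k::field) cpair \<Rightarrow> ('x, 'k) lpoly" where
  "spoly ord p = (case p of (tf, a, tg, b) \<Rightarrow>
     lsub (lscale 1 tf a) (lscale (lc ord (fst a) / lc ord (fst b)) tg b))"

definition regular_cpair :: "nat \<Rightarrow> ('x pp \<times> nat \<Rightarrow> 'x pp \<times> nat \<Rightarrow> bool)
    \<Rightarrow> ('x, 'k::comm_ring_1) cpair \<Rightarrow> bool" where
  "regular_cpair m mo p = (case p of (tf, a, tg, b) \<Rightarrow>
     sig_less mo (sig m mo (vmult tg (snd b))) (sig m mo (vmult tf (snd a))))"

definition gen_rewritable :: "nat \<Rightarrow> ('x pp \<times> nat \<Rightarrow> 'x pp \<times> nat \<Rightarrow> bool)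
    \<Rightarrow> (('x, 'k::comm_ring_1) lpoly \<Rightarrow> ('x, 'k) lpoly \<Rightarrow> bool)
    \<Rightarrow> ('x, 'k) lpoly set \<Rightarrow> 'x pp \<Rightarrow> ('x, 'k) lpoly \<Rightarrow> bool" where
  "gen_rewritable m mo lt B t a \<longleftrightarrow>
     a \<in> B \<and> fst a \<noteq> 0 \<and>
     (\<exists>b\<in>B. \<exists>M N. sig m mo (snd b) = Some M \<and> sig m mo (vmult t (snd a)) = Some N \<and>
              mdvd M N \<and> lt b a)"

definition cpair_gen_rewritable :: "nat \<Rightarrow> ('x pp \<times> nat \<Rightarrow> 'x pp \<times> nat \<Rightarrow> bool)
    \<Rightarrow> (('x, 'k::comm_ring_1) lpoly \<Rightarrow> ('x, 'k) lpoly \<Rightarrow> bool)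
    \<Rightarrow> ('x, 'k) lpoly set \<Rightarrow> ('x, 'k) cpair \<Rightarrow> bool" where
  "cpair_gen_rewritable m mo lt B p = (case p of (tf, a, tg, b) \<Rightarrow>
     gen_rewritable m mo lt B tf a \<or> gen_rewritable m mo lt B tg b)"

definition red1 :: "('x pp \<Rightarrow> 'x pp \<Rightarrow> bool) \<Rightarrow> nat \<Rightarrow> ('x pp \<times> nat \<Rightarrow> 'x pp \<times> nat \<Rightarrow> bool)
    \<Rightarrow> ('x, 'k::field) lpoly set \<Rightarrow> ('x, 'k) lpoly \<Rightarrow> ('x, 'k) lpoly \<Rightarrow> bool" where
  "red1 ord m mo G a a' \<longleftrightarrow>
     (\<exists>h\<in>G. fst a \<noteq> 0 \<and> fst h \<noteq> 0 \<and> pp_dvd (lpp ord (fst h)) (lpp ord (fst a)) \<and>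
        (let t = pp_div (lpp ord (fst a)) (lpp ord (fst h)) in
          sig_less mo (sig m mo (vmult t (snd h))) (sig m mo (snd a)) \<and>
          a' = lsub a (lscale (lc ord (fst a) / lc ord (fst h)) t h)))"

definition reduces_to :: "('x pp \<Rightarrow> 'x pp \<Rightarrow> bool) \<Rightarrow> nat \<Rightarrow> ('x pp \<times> nat \<Rightarrow> 'x pp \<times> nat \<Rightarrow> bool)
    \<Rightarrow> ('x, 'k::field) lpoly set \<Rightarrow> ('x, 'k) lpoly \<Rightarrow> ('x, 'k) lpoly \<Rightarrow> bool" where
  "reduces_to ord m mo G a a' \<longleftrightarrow>
     (red1 ord m mo G)\<^sup>*\<^sup>* a a' \<and> \<not> (\<exists>c. red1 ord m mo G a' c)"

definition G_init :: "nat \<Rightarrow> ('x, 'k::comm_ring_1) vec \<Rightarrow> ('x, 'k) lpoly set" where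
  "G_init m fs =
     {(fs i, unitv i) | i. i < m} \<union>
     {(0, \<lambda>k. (if k = i then fs j else 0) - (if k = j then fs i else 0)) | i j. i < j \<and> j < m}"

definition new_syz :: "nat \<Rightarrow> ('x, 'k::comm_ring_1) vec \<Rightarrow> ('x, 'k) lpoly \<Rightarrow> ('x, 'k) lpoly set" where
  "new_syz m fs h = {(0, \<lambda>k. (if k = i then fst h else 0) - fs i * snd h k) | i. i < m}"

text \<open>One iteration of the while loop: pick pair p from CP; r records the result of
  the reduction (None if the pair was discarded).\<close>
definition agc_step :: "('x pp \<Rightarrow> 'x pp \<Rightarrow> bool) \<Rightarrow> nat \<Rightarrow> ('x pp \<times> nat \<Rightarrow> 'x pp \<times> nat \<Rightarrow> bool)
    \<Rightarrow> ('x, 'k::field) vec \<Rightarrow> (('x, 'k) lpoly \<Rightarrow> ('x, 'k) lpoly \<Rightarrow> bool)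
    \<Rightarrow> ('x, 'k) lpoly set \<Rightarrow> ('x, 'k) cpair set \<Rightarrow> ('x, 'k) cpair \<Rightarrow> ('x, 'k) lpoly option
    \<Rightarrow> ('x, 'k) lpoly set \<Rightarrow> ('x, 'k) cpair set \<Rightarrow> bool" where
  "agc_step ord m mo fs lt G CP p r G' CP' \<longleftrightarrow>
     p \<in> CP \<and>
     (if regular_cpair m mo p \<and> \<not> cpair_gen_rewritable m mo lt G p
      then (\<exists>h. r = Some h \<and> reduces_to ord m mo G (spoly ord p) h \<and>
              CP' = (CP - {p}) \<union> cpairs_of ord m mo {h} G \<union> cpairs_of ord m mo G {h} \<and>
              G' = G \<union> {h} \<union> new_syz m fs h)
      else r = None \<and> G' = G \<and> CP' = CP - {p})"

text \<open>A terminating run of AGC of N iterations, with states Gs k, CPs k, chosen pairs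
  ps k and reduction results rs k.\<close>
definition agc_run :: "('x pp \<Rightarrow> 'x pp \<Rightarrow> bool) \<Rightarrow> nat \<Rightarrow> ('x pp \<times> nat \<Rightarrow> 'x pp \<times> nat \<Rightarrow> bool)
    \<Rightarrow> ('x, 'k::field) vec \<Rightarrow> (('x, 'k) lpoly \<Rightarrow> ('x, 'k) lpoly \<Rightarrow> bool)
    \<Rightarrow> nat \<Rightarrow> (nat \<Rightarrow> ('x, 'k) lpoly set) \<Rightarrow> (nat \<Rightarrow> ('x, 'k) cpair set)
    \<Rightarrow> (nat \<Rightarrow> ('x, 'k) cpair) \<Rightarrow> (nat \<Rightarrow> ('x, 'k) lpoly option) \<Rightarrow> bool" where
  "agc_run ord m mo fs lt N Gs CPs ps rs \<longleftrightarrow>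
     Gs 0 = G_init m fs \<and>
     CPs 0 = cpairs_of ord m mo (G_init m fs) (G_init m fs) \<and>
     (\<forall>k<N. agc_step ord m mo fs lt (Gs k) (CPs k) (ps k) (rs k) (Gs (Suc k)) (CPs (Suc k))) \<and>
     CPs N = {}"

text \<open>It is given as one relation on labeled polynomials whose restriction to the
  current G is used at each stage (updating = extending to new elements).\<close>
definition strict_po_on :: "'a set \<Rightarrow> ('a \<Rightarrow> 'a \<Rightarrow> bool) \<Rightarrow> bool" where
  "strict_po_on A lt \<longleftrightarrow> (\<forall>a\<in>A. \<not> lt a a) \<and>
     (\<forall>a\<in>A. \<forall>b\<in>A. \<forall>c\<in>A. lt a b \<and> lt b c \<longrightarrow> lt a c)"

text \<open>Admissible: whenever the S-polynomial of (tf, f^[u], tg, g^[v]) is reduced to h^[w],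
  then h^[w] < f^[u].\<close>
definition admissible_run :: "nat \<Rightarrow> (('x, 'k) lpoly \<Rightarrow> ('x, 'k) lpoly \<Rightarrow> bool)
    \<Rightarrow> (nat \<Rightarrow> ('x, 'k) cpair) \<Rightarrow> (nat \<Rightarrow> ('x, 'k) lpoly option) \<Rightarrow> bool" where
  "admissible_run N lt ps rs \<longleftrightarrow>
     (\<forall>k<N. \<forall>h. rs k = Some h \<longrightarrow> lt h (fst (snd (ps k))))"

definition labeled_GB :: "('x pp \<Rightarrow> 'x pp \<Rightarrow> bool) \<Rightarrow> nat \<Rightarrow> ('x pp \<times> nat \<Rightarrow> 'x pp \<times> nat \<Rightarrow> bool)
    \<Rightarrow> ('x, 'k::comm_ring_1) vec \<Rightarrow> ('x, 'k) lpoly set \<Rightarrow> bool" where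
  "labeled_GB ord m mo fs G \<longleftrightarrow>
     finite G \<and> (\<forall>g\<in>G. in_I m fs g) \<and>
     (\<forall>a. in_I m fs a \<and> fst a \<noteq> 0 \<longrightarrow>
        (\<exists>g\<in>G. fst g \<noteq> 0 \<and> pp_dvd (lpp ord (fst g)) (lpp ord (fst a)) \<and>
           \<not> sig_less mo (sig m mo (snd a))
               (sig m mo (vmult (pp_div (lpp ord (fst a)) (lpp ord (fst g))) (snd g)))))"

end

theory Submission
  imports Defs "HOL.Topological_Spaces" "HOL-Library.Infinite_Set"
begin

text \<open>
  The proof is an induction on signatures along the module term order, which is well founded by
  Dickson's lemma. Call \<open>g \<in> G\<close> a minimal rewriter of the signature \<open>T\<close> if the signature of \<open>g\<close>
  divides \<open>T\<close> and \<open>g\<close> is \<open><\<close>-minimal with this property. For every \<open>T\<close> two statements are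
  proved together: every \<open>f^[u]\<close> in \<open>I\<close> of signature \<open>T\<close> has a leading power product divisible by
  that of some \<open>g \<in> G\<close> whose corresponding multiple has signature at most \<open>T\<close>; and if \<open>t g\<close> has
  signature \<open>T\<close> for a minimal rewriter \<open>g\<close> of \<open>T\<close>, then \<open>t g\<close> is not top-reducible by \<open>G\<close> at a
  smaller signature.

  For the second statement let \<open>h\<close> be a top-reducer of \<open>t g\<close> of minimal reduced signature \<open>S\<close> and
  \<open>g'\<close> a minimal rewriter of \<open>S\<close>. The corresponding multiples of \<open>h\<close> and \<open>g'\<close> have signature
  \<open>S\<close>; cancelling it gives an element of smaller signature, covered by induction, so the minimality
  of \<open>h\<close> and the induction hypothesis at \<open>S\<close> force the two multiples to have the same leading
  power product. Then \<open>t g\<close> and the multiple of \<open>g'\<close> are multiples of a regular critical pair of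
  \<open>g\<close> and \<open>g'\<close>, which the generalized rewritable criterion keeps by the minimality of \<open>g\<close> and
  \<open>g'\<close>. Since AGC terminated, the pair was reduced, and by admissibility the result is an element
  of \<open>G\<close> below \<open>g\<close> whose signature divides \<open>T\<close>, contradicting the choice of \<open>g\<close>. The first
  statement follows by comparing \<open>f^[u]\<close> with the multiple of a minimal rewriter of \<open>T\<close>.
\<close>

section \<open>Extremal elements of finite sets\<close>

lemma finite_has_minimal_wrt:
  assumes "finite A" "A \<noteq> {}"
    and irrefl: "\<forall>x\<in>A. \<not> R x x"
    and trans: "\<forall>x\<in>A. \<forall>y\<in>A. \<forall>z\<in>A. R x y \<longrightarrow> R y z \<longrightarrow> R x z"
  shows "\<exists>x\<in>A. \<forall>y\<in>A. \<not> R y x"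
proof -
  define r where "r = {(y, x). y \<in> A \<and> x \<in> A \<and> R y x}"
  have "r \<subseteq> A \<times> A"
    by (auto simp: r_def)
  then have "finite r"
    using \<open>finite A\<close> by (simp add: finite_subset)
  moreover have "trans r"
    using trans unfolding r_def trans_def by blast
  then have "acyclic r"
    using irrefl by (simp add: acyclic_def r_def)
  ultimately have "wf r"
    by (rule finite_acyclic_wf)
  then obtain x where "x \<in> A" "\<And>y. (y, x) \<in> r \<Longrightarrow> y \<notin> A"
    using \<open>A \<noteq> {}\<close> by (metis ex_in_conv wfE_min)
  then show ?thesis
    unfolding r_def by blast
qed

lemma finite_has_greatest_wrt:
  assumes "finite A" "A \<noteq> {}"
    and total: "\<forall>x\<in>A. \<forall>y\<in>A. R x y \<or> R y x"
    and trans: "\<forall>x\<in>A. \<forall>y\<in>A. \<forall>z\<in>A. R x y \<longrightarrow> R y z \<longrightarrow> R x z"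
  shows "\<exists>x\<in>A. \<forall>y\<in>A. R y x"
proof -
  have "\<exists>x\<in>A. \<forall>y\<in>A. \<not> (R x y \<and> \<not> R y x)"
  proof (rule finite_has_minimal_wrt[OF assms(1,2)])
    show "\<forall>x\<in>A. \<forall>y\<in>A. \<forall>z\<in>A. R y x \<and> \<not> R x y \<longrightarrow> R z y \<and> \<not> R y z \<longrightarrow> R z x \<and> \<not> R x z"
      using trans by metis
  qed simp
  then show ?thesis
    using total by blast
qed

lemma the_greatest_wrt_eq:
  assumes "x \<in> A" "\<forall>y\<in>A. R y x"
    and "\<forall>x\<in>A. \<forall>y\<in>A. R x y \<longrightarrow> R y x \<longrightarrow> x = y"
  shows "(THE x. x \<in> A \<and> (\<forall>y\<in>A. R y x)) = x"
  using assms by (intro the_equality) blast+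

section \<open>Power products, monomial multiples and module supports\<close>

lemma lookup_single_mult:
  fixes f :: "('x pp \<Rightarrow>\<^sub>0 'k::comm_ring_1)"
  shows "Poly_Mapping.lookup (Poly_Mapping.single u c * f) k =
     (if \<exists>s. k = u + s then c * Poly_Mapping.lookup f (k - u) else 0)"
proof -
  have "Poly_Mapping.lookup (Poly_Mapping.single u c * f) k =
      c * (\<Sum>q. Poly_Mapping.lookup f q when k = u + q)"
    by (simp add: lookup_mult lookup_single when_mult)
  also have "(\<Sum>q. Poly_Mapping.lookup f q when k = u + q) =
      (if \<exists>s. k = u + s then Poly_Mapping.lookup f (k - u) else 0)"
  proof (cases "\<exists>s. k = u + s")
    case True
    then obtain s where s: "k = u + s" by blast
    have "(\<Sum>q. Poly_Mapping.lookup f q when k = u + q) = (\<Sum>q. Poly_Mapping.lookup f q when q = s)"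
      by (rule Sum_any.cong) (auto simp: s when_def)
    then show ?thesis
      using s by (simp add: Sum_any.delta)
  qed (simp add: when_def)
  finally show ?thesis by simp
qed

lemma lookup_single_mult_add:
  fixes f :: "('x pp \<Rightarrow>\<^sub>0 'k::comm_ring_1)"
  shows "Poly_Mapping.lookup (Poly_Mapping.single u c * f) (u + s) = c * Poly_Mapping.lookup f s"
  by (auto simp: lookup_single_mult)

lemma keys_single_mult:
  fixes f :: "('x pp \<Rightarrow>\<^sub>0 'k::field)"
  assumes "c \<noteq> 0"
  shows "Poly_Mapping.keys (Poly_Mapping.single u c * f) = (\<lambda>s. u + s) ` Poly_Mapping.keys f"
proof (rule set_eqI)
  fix k
  show "k \<in> Poly_Mapping.keys (Poly_Mapping.single u c * f) \<longleftrightarrow> k \<in> (\<lambda>s. u + s) ` Poly_Mapping.keys f"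
  proof (cases "\<exists>s. k = u + s")
    case True
    then obtain s where "k = u + s" by blast
    then show ?thesis
      using assms by (auto simp: in_keys_iff lookup_single_mult_add)
  qed (auto simp: in_keys_iff lookup_single_mult)
qed

lemma single_mult_eq_0_iff:
  fixes f :: "('x pp \<Rightarrow>\<^sub>0 'k::field)"
  assumes "c \<noteq> 0"
  shows "Poly_Mapping.single u c * f = 0 \<longleftrightarrow> f = 0"
  using keys_single_mult[OF assms, of u f] by (metis image_is_empty keys_eq_empty)

lemma keys_diff_subset:
  fixes f g :: "'a \<Rightarrow>\<^sub>0 'b::ab_group_add"
  shows "Poly_Mapping.keys (f - g) \<subseteq> Poly_Mapping.keys f \<union> Poly_Mapping.keys g"
  by (auto simp: in_keys_iff lookup_minus)

lemma pp_dvd_iff: "pp_dvd s t \<longleftrightarrow> (\<exists>u. t = s + u)"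
proof
  assume "pp_dvd s t"
  then have "t = s + (t - s)"
    by (intro poly_mapping_eqI) (auto simp: pp_dvd_def lookup_add lookup_minus)
  then show "\<exists>u. t = s + u" by blast
qed (auto simp: pp_dvd_def lookup_add)

lemma pp_dvd_add [simp]: "pp_dvd s (s + u)"
  by (auto simp: pp_dvd_iff)

lemma pp_div_add [simp]: "pp_div (s + u) s = (u :: 'x pp)"
  by (simp add: pp_div_def)

lemma add_pp_div: "pp_dvd s t \<Longrightarrow> s + pp_div t s = t"
  by (auto simp: pp_dvd_iff)

lemma pp_dvd_trans: "pp_dvd a b \<Longrightarrow> pp_dvd b c \<Longrightarrow> pp_dvd a c"
  by (auto simp: pp_dvd_def intro: le_trans)

lemma lookup_pp_lcm:
  "Poly_Mapping.lookup (pp_lcm s t) x = max (Poly_Mapping.lookup s x) (Poly_Mapping.lookup t x)"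
  by (simp add: pp_lcm_def lookup_add lookup_minus)

lemma pp_dvd_lcm1: "pp_dvd s (pp_lcm s t)"
  and pp_dvd_lcm2: "pp_dvd t (pp_lcm s t)"
  by (auto simp: pp_dvd_def lookup_pp_lcm)

lemma pp_lcm_least: "pp_dvd s w \<Longrightarrow> pp_dvd t w \<Longrightarrow> pp_dvd (pp_lcm s t) w"
  by (auto simp: pp_dvd_def lookup_pp_lcm)

lemma common_multiple_through_lcm:
  fixes a b t s :: "'x pp"
  assumes "a + t = b + s"
  obtains u where "t = u + pp_div (pp_lcm a b) a" "s = u + pp_div (pp_lcm a b) b"
proof -
  have "pp_dvd (pp_lcm a b) (a + t)"
    by (rule pp_lcm_least) (simp, simp add: assms)
  then obtain u where u: "a + t = pp_lcm a b + u"
    by (auto simp: pp_dvd_iff)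
  have "a + t = a + (u + pp_div (pp_lcm a b) a)"
    using u add_pp_div[OF pp_dvd_lcm1, of a b] by (metis add.commute add.left_commute)
  moreover have "b + s = b + (u + pp_div (pp_lcm a b) b)"
    using u assms add_pp_div[OF pp_dvd_lcm2, of b a] by (metis add.commute add.left_commute)
  ultimately show ?thesis
    using that by simp
qed

definition shift :: "'x pp \<Rightarrow> 'x pp \<times> nat \<Rightarrow> 'x pp \<times> nat" where
  "shift u a = (u + fst a, snd a)"

lemma mdvd_trans: "mdvd a b \<Longrightarrow> mdvd b c \<Longrightarrow> mdvd a c"
  by (auto simp: mdvd_def intro: pp_dvd_trans)

lemma mdvd_shift: "mdvd a (shift u a)"
  by (simp add: mdvd_def shift_def pp_dvd_iff add.commute)

lemma vmult_add: "vmult (u + t) v = vmult u (vmult t v)"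
  by (simp add: vmult_def mult.assoc[symmetric] mult_single)

lemma fst_lscale: "fst (lscale c t a) = Poly_Mapping.single t c * fst a"
  and snd_lscale: "snd (lscale c t a) = (\<lambda>i. Poly_Mapping.single t c * snd a i)"
  and snd_lscale1: "snd (lscale 1 t a) = vmult t (snd a)"
  by (simp_all add: lscale_def vmult_def)

lemma fst_lsub: "fst (lsub a b) = fst a - fst b"
  and snd_lsub: "snd (lsub a b) = (\<lambda>i. snd a i - snd b i)"
  by (simp_all add: lsub_def)

lemma sig_less_simps [simp]:
  "sig_less mo None None = False"
  "sig_less mo None (Some b) = True"
  "sig_less mo (Some a) None = False"
  "sig_less mo (Some a) (Some b) = (mo a b \<and> a \<noteq> b)"
  by (simp_all add: sig_less_def)

lemma sig_less_irrefl: "\<not> sig_less mo A A"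
  by (cases A) auto

lemma finite_msupp: "finite (msupp m u)"
proof -
  have "msupp m u \<subseteq> (\<Union>i<m. (\<lambda>t. (t, i)) ` Poly_Mapping.keys (u i))"
    by (auto simp: msupp_def)
  then show ?thesis
    by (rule finite_subset) auto
qed

lemma msupp_index: "a \<in> msupp m u \<Longrightarrow> snd a < m"
  by (auto simp: msupp_def)

lemma sig_eq_None_iff: "sig m mo u = None \<longleftrightarrow> msupp m u = {}"
  by (simp add: sig_def)

lemma msupp_scale:
  fixes u :: "('x, 'k::field) vec"
  assumes "c \<noteq> 0"
  shows "msupp m (\<lambda>i. Poly_Mapping.single t c * u i) = shift t ` msupp m u"
proof -
  have "\<And>i. Poly_Mapping.keys (Poly_Mapping.single t c * u i) = (\<lambda>s. t + s) ` Poly_Mapping.keys (u i)"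
    using keys_single_mult[OF assms] by blast
  then show ?thesis
    by (force simp: msupp_def shift_def)
qed

section \<open>Leading power products and signatures\<close>

locale term_orders =
  fixes ord :: "('x::finite) pp \<Rightarrow> 'x pp \<Rightarrow> bool"
    and mo :: "'x pp \<times> nat \<Rightarrow> 'x pp \<times> nat \<Rightarrow> bool"
    and m :: nat
  assumes term_order: "term_order ord"
    and module_term_order: "module_term_order m mo"
begin

lemma ord_antisym: "ord s t \<Longrightarrow> ord t s \<Longrightarrow> s = t"
  and ord_trans: "ord s t \<Longrightarrow> ord t u \<Longrightarrow> ord s u"
  and ord_total: "ord s t \<or> ord t s"
  and ord_plus: "ord s t \<Longrightarrow> ord (s + u) (t + u)"
  using term_order unfolding term_order_def by blast+

lemma mo_refl: "snd a < m \<Longrightarrow> mo a a"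
  and mo_antisym: "snd a < m \<Longrightarrow> snd b < m \<Longrightarrow> mo a b \<Longrightarrow> mo b a \<Longrightarrow> a = b"
  and mo_trans: "snd a < m \<Longrightarrow> snd b < m \<Longrightarrow> snd c < m \<Longrightarrow> mo a b \<Longrightarrow> mo b c \<Longrightarrow> mo a c"
  and mo_total: "snd a < m \<Longrightarrow> snd b < m \<Longrightarrow> mo a b \<or> mo b a"
  and mo_zero: "i < m \<Longrightarrow> mo (0, i) (t, i)"
  and mo_plus: "i < m \<Longrightarrow> j < m \<Longrightarrow> mo (s, i) (t, j) \<Longrightarrow> mo (s + u, i) (t + u, j)"
  using module_term_order unfolding module_term_order_def by blast+

lemma mo_shift: "snd a < m \<Longrightarrow> snd b < m \<Longrightarrow> mo a b \<Longrightarrow> mo (shift u a) (shift u b)"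
  using mo_plus[of "snd a" "snd b" "fst a" "fst b" u] by (simp add: shift_def add.commute)

lemma mdvd_imp_mo:
  assumes "snd b < m" "mdvd a b"
  shows "mo a b"
proof -
  obtain u where u: "fst b = fst a + u"
    using assms(2) by (auto simp: mdvd_def pp_dvd_iff)
  have "mo (0 + fst a, snd b) (u + fst a, snd b)"
    by (rule mo_plus[OF assms(1) assms(1) mo_zero[OF assms(1)]])
  then show ?thesis
    using assms(2) u by (cases a, cases b) (simp add: mdvd_def add.commute)
qed

lemma lpp_in_keys_greatest:
  fixes f :: "('x, 'k::zero) poly"
  assumes "f \<noteq> 0"
  shows "lpp ord f \<in> Poly_Mapping.keys f \<and> (\<forall>s\<in>Poly_Mapping.keys f. ord s (lpp ord f))"
proof -
  have "\<exists>x\<in>Poly_Mapping.keys f. \<forall>y\<in>Poly_Mapping.keys f. ord y x"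
    by (rule finite_has_greatest_wrt) (simp_all add: assms ord_total, meson ord_trans)
  then obtain x where x: "x \<in> Poly_Mapping.keys f" "\<forall>y\<in>Poly_Mapping.keys f. ord y x"
    by blast
  then have "lpp ord f = x"
    unfolding lpp_def using ord_antisym by (intro the_greatest_wrt_eq) blast+
  then show ?thesis
    using x by simp
qed

lemma lpp_eqI:
  fixes f :: "('x, 'k::zero) poly"
  assumes "t \<in> Poly_Mapping.keys f" "\<forall>s\<in>Poly_Mapping.keys f. ord s t"
  shows "lpp ord f = t"
  unfolding lpp_def using assms ord_antisym by (intro the_greatest_wrt_eq) blast+

lemma lc_nonzero:
  fixes f :: "('x, 'k::zero) poly"
  shows "f \<noteq> 0 \<Longrightarrow> lc ord f \<noteq> 0"
  using lpp_in_keys_greatest[of f] by (simp add: lc_def in_keys_iff)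

lemma lpp_single_mult:
  fixes f :: "('x, 'k::field) poly"
  assumes c: "c \<noteq> 0" and f: "f \<noteq> 0"
  shows "lpp ord (Poly_Mapping.single u c * f) = u + lpp ord f"
proof (rule lpp_eqI)
  have keys: "Poly_Mapping.keys (Poly_Mapping.single u c * f) = (\<lambda>s. u + s) ` Poly_Mapping.keys f"
    by (rule keys_single_mult[OF c])
  then show "u + lpp ord f \<in> Poly_Mapping.keys (Poly_Mapping.single u c * f)"
    using lpp_in_keys_greatest[OF f] by blast
  show "\<forall>s\<in>Poly_Mapping.keys (Poly_Mapping.single u c * f). ord s (u + lpp ord f)"
  proof
    fix s
    assume "s \<in> Poly_Mapping.keys (Poly_Mapping.single u c * f)"
    then obtain s' where s': "s = u + s'" "s' \<in> Poly_Mapping.keys f"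
      using keys by blast
    then have "ord (s' + u) (lpp ord f + u)"
      using lpp_in_keys_greatest[OF f] ord_plus by blast
    then show "ord s (u + lpp ord f)"
      using s' by (simp add: add.commute)
  qed
qed

lemma fst_lscale_eq_0_iff:
  fixes g :: "('x, 'k::field) lpoly"
  shows "c \<noteq> 0 \<Longrightarrow> fst (lscale c t g) = 0 \<longleftrightarrow> fst g = 0"
  by (simp add: fst_lscale single_mult_eq_0_iff)

lemma lpp_lscale:
  fixes g :: "('x, 'k::field) lpoly"
  shows "fst g \<noteq> 0 \<Longrightarrow> c \<noteq> 0 \<Longrightarrow> lpp ord (fst (lscale c t g)) = t + lpp ord (fst g)"
  by (simp add: fst_lscale lpp_single_mult)

lemma lpp_diff:
  fixes f g :: "('x, 'k::ab_group_add) poly"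
  assumes f: "f \<noteq> 0" and g: "g = 0 \<or> (ord (lpp ord g) (lpp ord f) \<and> lpp ord g \<noteq> lpp ord f)"
  shows "f - g \<noteq> 0 \<and> lpp ord (f - g) = lpp ord f"
proof -
  have "lpp ord f \<notin> Poly_Mapping.keys g"
  proof
    assume key: "lpp ord f \<in> Poly_Mapping.keys g"
    then have "g \<noteq> 0" by auto
    then have "ord (lpp ord f) (lpp ord g)"
      using lpp_in_keys_greatest[of g] key by blast
    then show False
      using g \<open>g \<noteq> 0\<close> ord_antisym by blast
  qed
  then have key: "lpp ord f \<in> Poly_Mapping.keys (f - g)"
    using lpp_in_keys_greatest[OF f] by (simp add: in_keys_iff lookup_minus)
  have "ord s (lpp ord f)" if s: "s \<in> Poly_Mapping.keys (f - g)" for s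
  proof -
    consider "s \<in> Poly_Mapping.keys f" | "s \<in> Poly_Mapping.keys g"
      using s keys_diff_subset[of f g] by blast
    then show ?thesis
    proof cases
      case 2
      then have "g \<noteq> 0" by auto
      then show ?thesis
        using 2 lpp_in_keys_greatest[of g] g ord_trans by blast
    qed (use lpp_in_keys_greatest[OF f] in blast)
  qed
  then have "lpp ord (f - g) = lpp ord f"
    using key by (intro lpp_eqI) auto
  then show ?thesis
    using key by auto
qed

lemma lpp_uminus:
  fixes f :: "('x, 'k::ab_group_add) poly"
  shows "lpp ord (- f) = lpp ord f"
proof -
  have "Poly_Mapping.keys (- f) = Poly_Mapping.keys f"
    by (auto simp: in_keys_iff)
  then show ?thesis
    by (simp add: lpp_def)
qed

lemma lpp_diff_neq:
  fixes f g :: "('x, 'k::ab_group_add) poly"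
  assumes f: "f \<noteq> 0" and g: "g \<noteq> 0" and neq: "lpp ord f \<noteq> lpp ord g"
  shows "f - g \<noteq> 0" "lpp ord (f - g) = lpp ord f \<or> lpp ord (f - g) = lpp ord g"
proof -
  consider "ord (lpp ord g) (lpp ord f)" | "ord (lpp ord f) (lpp ord g)"
    using ord_total by blast
  then have "f - g \<noteq> 0 \<and> (lpp ord (f - g) = lpp ord f \<or> lpp ord (f - g) = lpp ord g)"
  proof cases
    case 1
    then show ?thesis
      using lpp_diff[OF f, of g] neq by auto
  next
    case 2
    then have "g - f \<noteq> 0" "lpp ord (g - f) = lpp ord g"
      using lpp_diff[OF g, of f] neq by auto
    moreover have "f - g = - (g - f)"
      by simp
    ultimately show ?thesis
      by (metis lpp_uminus neg_equal_0_iff_equal)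
  qed
  then show "f - g \<noteq> 0" "lpp ord (f - g) = lpp ord f \<or> lpp ord (f - g) = lpp ord g"
    by blast+
qed

lemma sig_Some_greatest:
  assumes "sig m mo u = Some T"
  shows "T \<in> msupp m u \<and> (\<forall>b\<in>msupp m u. mo b T)"
proof -
  have ne: "msupp m u \<noteq> {}"
    using assms by (auto simp: sig_def split: if_splits)
  have "\<exists>x\<in>msupp m u. \<forall>y\<in>msupp m u. mo y x"
  proof (rule finite_has_greatest_wrt[OF finite_msupp ne])
    show "\<forall>x\<in>msupp m u. \<forall>y\<in>msupp m u. mo x y \<or> mo y x"
      using mo_total msupp_index by blast
    show "\<forall>x\<in>msupp m u. \<forall>y\<in>msupp m u. \<forall>z\<in>msupp m u. mo x y \<longrightarrow> mo y z \<longrightarrow> mo x z"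
      using mo_trans msupp_index by blast
  qed
  then obtain x where x: "x \<in> msupp m u" "\<forall>y\<in>msupp m u. mo y x"
    by blast
  then have "(THE a. a \<in> msupp m u \<and> (\<forall>b\<in>msupp m u. mo b a)) = x"
    using mo_antisym msupp_index by (intro the_greatest_wrt_eq) blast+
  then show ?thesis
    using assms ne x by (simp add: sig_def)
qed

lemma sig_eqI:
  assumes "T \<in> msupp m u" "\<forall>b\<in>msupp m u. mo b T"
  shows "sig m mo u = Some T"
proof -
  have "(THE a. a \<in> msupp m u \<and> (\<forall>b\<in>msupp m u. mo b a)) = T"
    using assms mo_antisym msupp_index by (intro the_greatest_wrt_eq) blast+
  then show ?thesis
    using assms by (auto simp: sig_def)
qed

lemma sig_index: "sig m mo u = Some T \<Longrightarrow> snd T < m"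
  using sig_Some_greatest msupp_index by blast

text \<open>The module order is only an order on monomials with index below \<open>m\<close>; the signatures
  that can occur are the ones satisfying \<open>sig_valid\<close>.\<close>

definition sig_valid :: "('x pp \<times> nat) option \<Rightarrow> bool" where
  "sig_valid A \<longleftrightarrow> (\<forall>T. A = Some T \<longrightarrow> snd T < m)"

lemma sig_valid_sig: "sig_valid (sig m mo u)"
  and sig_valid_Some: "snd T < m \<Longrightarrow> sig_valid (Some T)"
  using sig_index by (auto simp: sig_valid_def)

lemma sig_less_trans:
  assumes "sig_valid A" "sig_valid B" "sig_valid C" "sig_less mo A B" "sig_less mo B C"
  shows "sig_less mo A C"
proof (cases A)
  case (Some a)
  then obtain b c where b: "B = Some b" and c: "C = Some c"
    using assms by (cases B; cases C) auto
  have ia: "snd a < m" and ib: "snd b < m" and ic: "snd c < m"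
    using assms Some b c by (auto simp: sig_valid_def)
  have ab: "mo a b" "a \<noteq> b" and bc: "mo b c" "b \<noteq> c"
    using assms Some b c by auto
  have "mo a c"
    using mo_trans[OF ia ib ic ab(1) bc(1)] .
  moreover have "a \<noteq> c"
    using mo_antisym[OF ib ic bc(1)] mo_trans[OF ib ic ia bc(1)] ab bc(2) by blast
  ultimately show ?thesis
    using Some c by simp
qed (use assms in \<open>cases B; cases C; auto\<close>)

lemma sig_less_asym:
  assumes "sig_valid A" "sig_valid B" "sig_less mo A B"
  shows "\<not> sig_less mo B A"
  using assms mo_antisym by (cases A; cases B) (auto simp: sig_valid_def)

lemma sig_le_less_trans:
  assumes "sig_valid A" "sig_valid B" "sig_valid C" "\<not> sig_less mo A B" "sig_less mo A C"
  shows "sig_less mo B C"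
proof -
  have "A = B \<or> sig_less mo B A"
    using assms(1,2,4) mo_total by (cases A; cases B) (auto simp: sig_valid_def)
  then show ?thesis
    using sig_less_trans assms by blast
qed

lemma sig_scale:
  fixes u :: "('x, 'k::field) vec"
  assumes c: "c \<noteq> 0"
  shows "sig m mo (\<lambda>i. Poly_Mapping.single t c * u i) = map_option (shift t) (sig m mo u)"
proof (cases "sig m mo u")
  case None
  then have "sig m mo (\<lambda>i. Poly_Mapping.single t c * u i) = None"
    using msupp_scale[OF c, of m t u] by (simp add: sig_eq_None_iff)
  with None show ?thesis
    by simp
next
  case (Some T)
  have "sig m mo (\<lambda>i. Poly_Mapping.single t c * u i) = Some (shift t T)"
  proof (rule sig_eqI)
    show "shift t T \<in> msupp m (\<lambda>i. Poly_Mapping.single t c * u i)"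
      using msupp_scale[OF c] sig_Some_greatest[OF Some] by blast
    show "\<forall>b\<in>msupp m (\<lambda>i. Poly_Mapping.single t c * u i). mo b (shift t T)"
    proof
      fix b
      assume "b \<in> msupp m (\<lambda>i. Poly_Mapping.single t c * u i)"
      then obtain b' where b': "b = shift t b'" "b' \<in> msupp m u"
        using msupp_scale[OF c] by blast
      then show "mo b (shift t T)"
        using sig_Some_greatest[OF Some] mo_shift msupp_index sig_index[OF Some] by blast
    qed
  qed
  then show ?thesis
    using Some by simp
qed

lemma sig_vmult:
  fixes u :: "('x, 'k::field) vec"
  shows "sig m mo (vmult t u) = map_option (shift t) (sig m mo u)"
  unfolding vmult_def by (rule sig_scale) simp

lemma sig_diff_eq:
  fixes u v :: "('x, 'k::field) vec"
  assumes "sig_less mo (sig m mo v) (sig m mo u)"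
  shows "sig m mo (\<lambda>i. u i - v i) = sig m mo u"
proof -
  obtain T where T: "sig m mo u = Some T"
    using assms by (cases "sig m mo u"; cases "sig m mo v") auto
  have below: "mo b T \<and> b \<noteq> T" if b: "b \<in> msupp m v" for b
  proof -
    obtain S where S: "sig m mo v = Some S"
      using b by (cases "sig m mo v") (auto simp: sig_eq_None_iff)
    have "mo b S"
      using sig_Some_greatest[OF S] b by blast
    moreover have "mo S T" "S \<noteq> T"
      using assms T S by auto
    moreover note msupp_index[OF b] sig_index[OF S] sig_index[OF T]
    ultimately show ?thesis
      using mo_trans mo_antisym by metis
  qed
  have "sig m mo (\<lambda>i. u i - v i) = Some T"
  proof (rule sig_eqI)
    obtain t i where ti: "T = (t, i)" by (cases T)
    have "t \<in> Poly_Mapping.keys (u i)" "i < m"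
      using sig_Some_greatest[OF T] ti by (auto simp: msupp_def)
    moreover have "t \<notin> Poly_Mapping.keys (v i)"
      using below[of T] ti \<open>i < m\<close> by (auto simp: msupp_def)
    ultimately show "T \<in> msupp m (\<lambda>i. u i - v i)"
      using ti by (auto simp: msupp_def in_keys_iff lookup_minus)
    have "msupp m (\<lambda>i. u i - v i) \<subseteq> msupp m u \<union> msupp m v"
      using keys_diff_subset by (force simp: msupp_def)
    then show "\<forall>b\<in>msupp m (\<lambda>i. u i - v i). mo b T"
      using sig_Some_greatest[OF T] below by blast
  qed
  then show ?thesis
    using T by simp
qed

lemma sig_cancel:
  fixes u v :: "('x, 'k::field) vec"
  assumes u: "sig m mo u = Some T" and v: "sig m mo v = Some T"
  obtains c where "c \<noteq> 0"
    "sig_less mo (sig m mo (\<lambda>i. u i - Poly_Mapping.single 0 c * v i)) (Some T)"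
proof -
  obtain t i where ti: "T = (t, i)" by (cases T)
  have ut: "Poly_Mapping.lookup (u i) t \<noteq> 0" and vt: "Poly_Mapping.lookup (v i) t \<noteq> 0"
    using sig_Some_greatest[OF u] sig_Some_greatest[OF v] ti by (auto simp: msupp_def in_keys_iff)
  define c where "c = Poly_Mapping.lookup (u i) t / Poly_Mapping.lookup (v i) t"
  have c0: "c \<noteq> 0"
    using ut vt by (simp add: c_def)
  define w where "w = (\<lambda>i. u i - Poly_Mapping.single 0 c * v i)"
  have "msupp m w \<subseteq> msupp m u \<union> msupp m (\<lambda>i. Poly_Mapping.single 0 c * v i)"
    unfolding w_def using keys_diff_subset by (force simp: msupp_def)
  moreover have "msupp m (\<lambda>i. Poly_Mapping.single 0 c * v i) = msupp m v"
    using msupp_scale[OF c0, of m 0 v] by (simp add: shift_def)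
  moreover have "T \<notin> msupp m w"
    using lookup_single_mult_add[where u=0 and c=c and f="v i" and s=t] vt ti
    by (auto simp: w_def msupp_def in_keys_iff lookup_minus c_def)
  ultimately have "\<forall>b\<in>msupp m w. mo b T \<and> b \<noteq> T"
    using sig_Some_greatest[OF u] sig_Some_greatest[OF v] by blast
  then have "sig_less mo (sig m mo w) (Some T)"
    using sig_Some_greatest[of w] by (cases "sig m mo w") auto
  then show ?thesis
    using c0 that unfolding w_def by blast
qed

end

section \<open>Well-foundedness of the module term order\<close>

lemma nat_seq_monotone_subseq:
  fixes f :: "nat \<Rightarrow> nat"
  obtains r :: "nat \<Rightarrow> nat" where "strict_mono r" "\<And>a b. a \<le> b \<Longrightarrow> f (r a) \<le> f (r b)"
proof -
  obtain r where r: "strict_mono r" "monoseq (\<lambda>n. f (r n))"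
    using seq_monosub by blast
  show ?thesis
  proof (cases "\<forall>a. \<forall>b\<ge>a. f (r a) \<le> f (r b)")
    case True
    then show ?thesis
      using r(1) that by blast
  next
    case False
    then have decreasing: "\<forall>a. \<forall>b\<ge>a. f (r b) \<le> f (r a)"
      using r(2) unfolding monoseq_def by blast
    define v where "v = (LEAST v. v \<in> range (\<lambda>n. f (r n)))"
    obtain n0 where n0: "f (r n0) = v"
      unfolding v_def by (metis (mono_tags, lifting) LeastI rangeE rangeI)
    have "\<And>n. v \<le> f (r n)"
      unfolding v_def by (rule Least_le) blast
    then have "\<And>n. f (r (n + n0)) = v"
      using decreasing n0 by (metis le_add2 le_antisym)
    moreover have "strict_mono (\<lambda>n. r (n + n0))"
      using r(1) by (simp add: strict_mono_def)
    ultimately show ?thesis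
      using that[of "\<lambda>n. r (n + n0)"] by simp
  qed
qed

lemma exists_subseq_lookup_monotone:
  fixes s :: "nat \<Rightarrow> ('x \<Rightarrow>\<^sub>0 nat)"
  assumes "finite X"
  shows "\<exists>r::nat \<Rightarrow> nat. strict_mono r \<and> (\<forall>x\<in>X. \<forall>a b. a \<le> b \<longrightarrow>
            Poly_Mapping.lookup (s (r a)) x \<le> Poly_Mapping.lookup (s (r b)) x)"
  using assms
proof (induction X rule: finite_induct)
  case empty
  show ?case
    using strict_mono_id by auto
next
  case (insert x X)
  then obtain r :: "nat \<Rightarrow> nat" where r: "strict_mono r" "\<forall>y\<in>X. \<forall>a b. a \<le> b \<longrightarrow>
      Poly_Mapping.lookup (s (r a)) y \<le> Poly_Mapping.lookup (s (r b)) y"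
    by blast
  obtain r2 :: "nat \<Rightarrow> nat" where r2: "strict_mono r2"
    "\<And>a b. a \<le> b \<Longrightarrow> Poly_Mapping.lookup (s (r (r2 a))) x \<le> Poly_Mapping.lookup (s (r (r2 b))) x"
    using nat_seq_monotone_subseq[of "\<lambda>n. Poly_Mapping.lookup (s (r n)) x"] by blast
  have "\<forall>y\<in>insert x X. \<forall>a b. a \<le> b \<longrightarrow>
      Poly_Mapping.lookup (s (r (r2 a))) y \<le> Poly_Mapping.lookup (s (r (r2 b))) y"
    using r(2) r2 strict_mono_less_eq[OF r2(1)] by auto
  then show ?case
    using strict_mono_compose[OF r(1) r2(1)] by (intro exI[of _ "\<lambda>n. r (r2 n)"]) (simp add: comp_def)
qed

lemma dickson:
  fixes s :: "nat \<Rightarrow> ('x::finite \<Rightarrow>\<^sub>0 nat)"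
  obtains i j where "i < j" "pp_dvd (s i) (s j)"
proof -
  obtain r :: "nat \<Rightarrow> nat" where r: "strict_mono r" "\<forall>x. \<forall>a b. a \<le> b \<longrightarrow>
      Poly_Mapping.lookup (s (r a)) x \<le> Poly_Mapping.lookup (s (r b)) x"
    using exists_subseq_lookup_monotone[of UNIV s] by auto
  have "r 0 < r 1"
    using r(1) by (simp add: strict_mono_def)
  moreover have "pp_dvd (s (r 0)) (s (r 1))"
    using r(2) by (simp add: pp_dvd_def)
  ultimately show ?thesis
    using that by blast
qed

context term_orders
begin

definition module_less :: "(('x pp \<times> nat) \<times> ('x pp \<times> nat)) set" where
  "module_less = {(S, T). snd S < m \<and> snd T < m \<and> mo S T \<and> S \<noteq> T}"

lemma trans_module_less: "trans module_less"
  unfolding module_less_def trans_def using mo_trans mo_antisym by blast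

lemma wf_module_less: "wf module_less"
proof -
  have "\<nexists>f. \<forall>i. (f (Suc i), f i) \<in> module_less"
  proof
    assume "\<exists>f. \<forall>i. (f (Suc i), f i) \<in> module_less"
    then obtain f where f: "\<And>i. (f (Suc i), f i) \<in> module_less"
      by blast
    have idx: "\<And>i. snd (f i) < m"
      using f by (simp add: module_less_def)
    have desc: "(f j, f i) \<in> module_less" if "i < j" for i j
      using that
    proof (induction j)
      case (Suc j)
      then show ?case
        using f trans_module_less by (metis less_Suc_eq transD)
    qed simp
    have "UNIV = (\<Union>k\<in>{..<m}. {n. snd (f n) = k})"
      using idx by auto
    then obtain k where k: "infinite {n. snd (f n) = k}"
      by (metis finite_UN_I finite_lessThan infinite_UNIV_nat)
    obtain r :: "nat \<Rightarrow> nat" where r: "strict_mono r" "\<And>n. snd (f (r n)) = k"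
      using infinite_enumerate[OF k] by blast
    obtain i j where ij: "i < j" "pp_dvd (fst (f (r i))) (fst (f (r j)))"
      using dickson[of "\<lambda>n. fst (f (r n))"] by blast
    have "mdvd (f (r i)) (f (r j))"
      using ij r(2) by (simp add: mdvd_def)
    then have "mo (f (r i)) (f (r j))"
      by (rule mdvd_imp_mo[OF idx])
    moreover have "(f (r j), f (r i)) \<in> module_less"
      using desc r(1) ij(1) by (simp add: strict_mono_def)
    ultimately show False
      using mo_antisym unfolding module_less_def by blast
  qed
  then show ?thesis
    using wf_iff_no_infinite_down_chain by blast
qed

end

section \<open>Labeled polynomials in the ideal\<close>

lemma dot_diff: "dot m (\<lambda>i. u i - v i) fs = dot m u fs - dot m v fs"
  by (simp add: dot_def sum_subtractf left_diff_distrib)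

lemma dot_scale: "dot m (\<lambda>i. Poly_Mapping.single t c * u i) fs = Poly_Mapping.single t c * dot m u fs"
  by (simp add: dot_def sum_distrib_left mult.assoc)

lemma in_I_lsub: "in_I m fs a \<Longrightarrow> in_I m fs b \<Longrightarrow> in_I m fs (lsub a b)"
  by (simp add: in_I_def lsub_def is_vec_def dot_diff)

lemma in_I_lscale: "in_I m fs a \<Longrightarrow> in_I m fs (lscale c t a)"
  by (simp add: in_I_def lscale_def is_vec_def dot_scale)

lemma in_I_msupp_nonempty:
  assumes "in_I m fs a" "fst a \<noteq> 0"
  shows "msupp m (snd a) \<noteq> {}"
proof
  assume "msupp m (snd a) = {}"
  then have "Poly_Mapping.keys (snd a i) = {}" if "i < m" for i
    using that unfolding msupp_def by blast
  then have "\<forall>i<m. snd a i = 0"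
    by simp
  then have "dot m (snd a) fs = 0"
    by (simp add: dot_def)
  then show False
    using assms by (simp add: in_I_def)
qed

lemma in_I_G_init: "g \<in> G_init m fs \<Longrightarrow> in_I m fs g"
proof (unfold G_init_def, elim UnE CollectE exE conjE)
  fix i
  assume g: "g = (fs i, unitv i)" and i: "i < m"
  have "dot m (unitv i) fs = (\<Sum>k<m. if k = i then fs k else 0)"
    unfolding dot_def unitv_def by (intro sum.cong) auto
  then show ?thesis
    using g i by (simp add: in_I_def is_vec_def unitv_def)
next
  fix i j
  assume g: "g = (0, \<lambda>k. (if k = i then fs j else 0) - (if k = j then fs i else 0))"
    and ij: "i < j" "j < m"
  have "dot m (snd g) fs
      = (\<Sum>k<m. (if k = i then fs j * fs k else 0) - (if k = j then fs i * fs k else 0))"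
    unfolding dot_def g by (rule sum.cong) (auto simp: left_diff_distrib)
  also have "\<dots> = (\<Sum>k<m. (if k = i then fs j * fs k else 0)) - (\<Sum>k<m. (if k = j then fs i * fs k else 0))"
    by (rule sum_subtractf)
  also have "\<dots> = 0"
    using ij by (simp add: mult.commute)
  finally show ?thesis
    using g ij by (simp add: in_I_def is_vec_def)
qed

lemma finite_G_init: "finite (G_init m fs)"
proof -
  have "G_init m fs \<subseteq> (\<lambda>i. (fs i, unitv i)) ` {..<m} \<union>
      (\<lambda>(i, j). (0, \<lambda>k. (if k = i then fs j else 0) - (if k = j then fs i else 0))) ` ({..<m} \<times> {..<m})"
    unfolding G_init_def by force
  then show ?thesis
    by (rule finite_subset) simp
qed

lemma in_I_new_syz:
  assumes h: "in_I m fs h" and g: "g \<in> new_syz m fs h"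
  shows "in_I m fs g"
proof -
  obtain i where g: "g = (0, \<lambda>k. (if k = i then fst h else 0) - fs i * snd h k)" and i: "i < m"
    using g by (auto simp: new_syz_def)
  have "dot m (snd g) fs
      = (\<Sum>k<m. (if k = i then fst h * fs k else 0) - fs i * (snd h k * fs k))"
    unfolding dot_def g by (rule sum.cong) (auto simp: left_diff_distrib mult.assoc)
  also have "\<dots> = (\<Sum>k<m. (if k = i then fst h * fs k else 0)) - fs i * (\<Sum>k<m. snd h k * fs k)"
    by (simp add: sum_subtractf sum_distrib_left)
  also have "\<dots> = 0"
    using i h by (simp add: in_I_def dot_def mult.commute)
  finally show ?thesis
    using g i h by (simp add: in_I_def is_vec_def)
qed

lemma finite_new_syz: "finite (new_syz m fs h)"
proof -
  have "new_syz m fs h = (\<lambda>i. (0, \<lambda>k. (if k = i then fst h else 0) - fs i * snd h k)) ` {..<m}"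
    by (auto simp: new_syz_def)
  then show ?thesis
    by simp
qed

lemma fst_new_syz: "g \<in> new_syz m fs h \<Longrightarrow> fst g = 0"
  by (auto simp: new_syz_def)

lemma in_I_red:
  assumes "(red1 ord m mo G)\<^sup>*\<^sup>* a a'" "\<forall>g\<in>G. in_I m fs g" "in_I m fs a"
  shows "in_I m fs a'"
  using assms(1)
proof (induction rule: rtranclp_induct)
  case (step b b')
  then obtain c t h where "h \<in> G" "b' = lsub b (lscale c t h)"
    unfolding red1_def Let_def by blast
  then show ?case
    using step.IH assms(2) by (blast intro: in_I_lsub in_I_lscale)
qed (rule assms(3))

lemma is_cpairD:
  assumes "is_cpair ord m mo a b p"
  shows "fst a \<noteq> 0" "fst b \<noteq> 0"
    "p = (pp_div (pp_lcm (lpp ord (fst a)) (lpp ord (fst b))) (lpp ord (fst a)), a,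
          pp_div (pp_lcm (lpp ord (fst a)) (lpp ord (fst b))) (lpp ord (fst b)), b)"
  using assms unfolding is_cpair_def Let_def by blast+

lemma in_I_spoly:
  assumes "is_cpair ord m mo a b p" "in_I m fs a" "in_I m fs b"
  shows "in_I m fs (spoly ord p)"
  using is_cpairD[OF assms(1)] assms(2,3) by (auto simp: spoly_def intro!: in_I_lsub in_I_lscale)

lemma is_cpair_self_not_regular: "is_cpair ord m mo a a p \<Longrightarrow> \<not> regular_cpair m mo p"
  using is_cpairD[of ord m mo a a p] sig_less_irrefl by (simp add: regular_cpair_def)

lemma cpair_gen_rewritable_mono:
  assumes "B \<subseteq> B'" "cpair_gen_rewritable m mo lt B p"
  shows "cpair_gen_rewritable m mo lt B' p"
proof -
  obtain tf a tg b where p: "p = (tf, a, tg, b)"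
    by (cases p) auto
  have "gen_rewritable m mo lt B' tf a \<or> gen_rewritable m mo lt B' tg b"
    using assms unfolding p cpair_gen_rewritable_def gen_rewritable_def by blast
  then show ?thesis
    unfolding p cpair_gen_rewritable_def by simp
qed

context term_orders
begin

lemma sig_red:
  fixes a :: "('x, 'k::field) lpoly"
  assumes "(red1 ord m mo G)\<^sup>*\<^sup>* a a'"
  shows "sig m mo (snd a') = sig m mo (snd a)"
  using assms
proof (induction rule: rtranclp_induct)
  case (step b b')
  then obtain h where h: "fst b \<noteq> 0" "fst h \<noteq> 0"
    and less: "sig_less mo (sig m mo (vmult (pp_div (lpp ord (fst b)) (lpp ord (fst h))) (snd h)))
        (sig m mo (snd b))"
    and b': "b' = lsub b (lscale (lc ord (fst b) / lc ord (fst h)) (pp_div (lpp ord (fst b)) (lpp ord (fst h))) h)"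
    unfolding red1_def Let_def by blast
  have "lc ord (fst b) / lc ord (fst h) \<noteq> 0"
    using lc_nonzero[OF h(1)] lc_nonzero[OF h(2)] by simp
  then have "sig m mo (snd b') = sig m mo (snd b)"
    using less b' by (simp add: snd_lsub snd_lscale sig_diff_eq sig_scale sig_vmult)
  then show ?case
    using step.IH by simp
qed simp

lemma sig_spoly:
  fixes a :: "('x, 'k::field) lpoly"
  assumes "is_cpair ord m mo a b p" "regular_cpair m mo p"
  shows "sig m mo (snd (spoly ord p)) = sig m mo (vmult (fst p) (snd a))"
proof -
  define tf where "tf = pp_div (pp_lcm (lpp ord (fst a)) (lpp ord (fst b))) (lpp ord (fst a))"
  define tg where "tg = pp_div (pp_lcm (lpp ord (fst a)) (lpp ord (fst b))) (lpp ord (fst b))"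
  have p: "p = (tf, a, tg, b)"
    using is_cpairD(3)[OF assms(1)] by (simp add: tf_def tg_def)
  have "lc ord (fst a) / lc ord (fst b) \<noteq> 0"
    using lc_nonzero[OF is_cpairD(1)[OF assms(1)]] lc_nonzero[OF is_cpairD(2)[OF assms(1)]] by simp
  moreover have "sig_less mo (sig m mo (vmult tg (snd b))) (sig m mo (vmult tf (snd a)))"
    using assms(2) p by (simp add: regular_cpair_def)
  ultimately show ?thesis
    using p by (simp add: spoly_def snd_lsub snd_lscale sig_diff_eq sig_scale sig_vmult flip: vmult_def)
qed

lemma regular_cpair_of_common_multiple:
  fixes g g' :: "('x, 'k::field) lpoly"
  assumes g: "fst g \<noteq> 0" and g': "fst g' \<noteq> 0"
    and T: "sig m mo (vmult t (snd g)) = Some T" and S: "sig m mo (vmult s (snd g')) = Some S"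
    and ST: "mo S T" "S \<noteq> T"
    and lpp: "lpp ord (fst g) + t = lpp ord (fst g') + s"
  obtains tf tg M M' where "is_cpair ord m mo g g' (tf, g, tg, g')" "regular_cpair m mo (tf, g, tg, g')"
    "sig m mo (vmult tf (snd g)) = Some M" "mdvd M T"
    "sig m mo (vmult tg (snd g')) = Some M'" "mdvd M' S"
proof -
  define L where "L = pp_lcm (lpp ord (fst g)) (lpp ord (fst g'))"
  define tf where "tf = pp_div L (lpp ord (fst g))"
  define tg where "tg = pp_div L (lpp ord (fst g'))"
  obtain u where t: "t = u + tf" and s: "s = u + tg"
    using common_multiple_through_lcm[OF lpp] unfolding tf_def tg_def L_def by blast
  obtain M0 M0' where M0: "sig m mo (snd g) = Some M0" and M0': "sig m mo (snd g') = Some M0'"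
    using T S by (auto simp: sig_vmult)
  define M M' where "M = shift tf M0" and "M' = shift tg M0'"
  have sM: "sig m mo (vmult tf (snd g)) = Some M" and sM': "sig m mo (vmult tg (snd g')) = Some M'"
    using M0 M0' by (simp_all add: sig_vmult M_def M'_def)
  have "Some T = sig m mo (vmult u (vmult tf (snd g)))"
    using T by (simp add: t vmult_add)
  then have TM: "T = shift u M"
    using sM by (simp add: sig_vmult[where t=u])
  have "Some S = sig m mo (vmult u (vmult tg (snd g')))"
    using S by (simp add: s vmult_add)
  then have SM: "S = shift u M'"
    using sM' by (simp add: sig_vmult[where t=u])
  then have dvd: "mdvd M T" "mdvd M' S"
    using TM by (simp_all add: mdvd_shift)
  have idx: "snd M < m" "snd M' < m"
    using sig_index sM sM' by blast+
  have "\<not> mo M M'"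
  proof
    assume "mo M M'"
    then have "mo T S"
      using mo_shift[OF idx] TM SM by simp
    then show False
      using mo_antisym ST sig_index T S by blast
  qed
  then have "mo M' M" "M' \<noteq> M"
    using mo_total[OF idx] mo_refl[OF idx(1)] by blast+
  then have "is_cpair ord m mo g g' (tf, g, tg, g')" "regular_cpair m mo (tf, g, tg, g')"
    using g g' sM sM' \<open>\<not> mo M M'\<close>
    by (simp_all add: is_cpair_def regular_cpair_def Let_def tf_def tg_def L_def)
  then show ?thesis
    using that sM sM' dvd by blast
qed

end

section \<open>Terminating admissible runs of AGC\<close>

locale agc_admissible_run = term_orders ord mo m
  for ord :: "('x::finite) pp \<Rightarrow> 'x pp \<Rightarrow> bool"
    and mo :: "'x pp \<times> nat \<Rightarrow> 'x pp \<times> nat \<Rightarrow> bool"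
    and m :: nat +
  fixes fs :: "('x, 'k::field) vec"
    and lt :: "('x, 'k) lpoly \<Rightarrow> ('x, 'k) lpoly \<Rightarrow> bool"
    and N :: nat
    and Gs :: "nat \<Rightarrow> ('x, 'k) lpoly set"
    and CPs :: "nat \<Rightarrow> ('x, 'k) cpair set"
    and ps :: "nat \<Rightarrow> ('x, 'k) cpair"
    and rs :: "nat \<Rightarrow> ('x, 'k) lpoly option"
  assumes run: "agc_run ord m mo fs lt N Gs CPs ps rs"
    and strict_po: "strict_po_on (Gs N) lt"
    and admissible: "admissible_run N lt ps rs"
begin

lemma Gs_0: "Gs 0 = G_init m fs"
  and CPs_0: "CPs 0 = cpairs_of ord m mo (G_init m fs) (G_init m fs)"
  and CPs_N: "CPs N = {}"
  and step: "k < N \<Longrightarrow> agc_step ord m mo fs lt (Gs k) (CPs k) (ps k) (rs k) (Gs (Suc k)) (CPs (Suc k))"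
  using run by (simp_all add: agc_run_def)

lemma step_cases [consumes 1, case_names new discarded]:
  assumes "k < N"
  obtains (new) h where "rs k = Some h" "regular_cpair m mo (ps k)"
      "\<not> cpair_gen_rewritable m mo lt (Gs k) (ps k)"
      "reduces_to ord m mo (Gs k) (spoly ord (ps k)) h"
      "CPs (Suc k) = (CPs k - {ps k}) \<union> cpairs_of ord m mo {h} (Gs k) \<union> cpairs_of ord m mo (Gs k) {h}"
      "Gs (Suc k) = Gs k \<union> {h} \<union> new_syz m fs h"
  | (discarded) "\<not> regular_cpair m mo (ps k) \<or> cpair_gen_rewritable m mo lt (Gs k) (ps k)"
      "rs k = None" "Gs (Suc k) = Gs k" "CPs (Suc k) = CPs k - {ps k}"
  using step[OF assms] unfolding agc_step_def by (auto split: if_splits)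

lemma ps_in_CPs: "k < N \<Longrightarrow> ps k \<in> CPs k"
  using step unfolding agc_step_def by blast

lemma Gs_Suc_mono: "k < N \<Longrightarrow> Gs k \<subseteq> Gs (Suc k)"
  by (cases rule: step_cases) auto

lemma Gs_mono: "j \<le> k \<Longrightarrow> k \<le> N \<Longrightarrow> Gs j \<subseteq> Gs k"
proof (induction k rule: dec_induct)
  case (step n)
  then show ?case
    using Gs_Suc_mono[of n] by simp
qed simp

lemma Gs_subset_Gs_N: "k \<le> N \<Longrightarrow> Gs k \<subseteq> Gs N"
  using Gs_mono by simp

lemma pair_eventually_picked:
  "j \<le> N \<Longrightarrow> p \<in> CPs j \<Longrightarrow> \<exists>k. j \<le> k \<and> k < N \<and> ps k = p"
proof (induction "N - j" arbitrary: j)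
  case 0
  then show ?case
    using CPs_N by (simp add: le_antisym)
next
  case (Suc d)
  then have "j < N" by simp
  show ?case
  proof (cases "ps j = p")
    case False
    have "p \<in> CPs (Suc j)"
      using \<open>j < N\<close> False Suc.prems by (cases rule: step_cases) auto
    moreover have "d = N - Suc j" "Suc j \<le> N"
      using Suc.hyps(2) \<open>j < N\<close> by simp_all
    ultimately obtain k where "Suc j \<le> k" "k < N" "ps k = p"
      using Suc.hyps(1) by blast
    then show ?thesis
      by (intro exI[of _ k]) simp
  qed (use \<open>j < N\<close> in blast)
qed

lemma run_invariants:
  "k \<le> N \<Longrightarrow> (\<forall>g\<in>Gs k. in_I m fs g) \<and> finite (Gs k) \<and>
     (\<forall>p\<in>CPs k. \<exists>a\<in>Gs k. \<exists>b\<in>Gs k. is_cpair ord m mo a b p)"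
proof (induction k)
  case 0
  show ?case
    using Gs_0 CPs_0 in_I_G_init finite_G_init by (auto simp: cpairs_of_def)
next
  case (Suc k)
  then have k: "k < N" and IH: "\<forall>g\<in>Gs k. in_I m fs g" "finite (Gs k)"
    "\<forall>p\<in>CPs k. \<exists>a\<in>Gs k. \<exists>b\<in>Gs k. is_cpair ord m mo a b p"
    by auto
  show ?case
  using k proof (cases rule: step_cases)
    case (new h)
    obtain a b where ab: "a \<in> Gs k" "b \<in> Gs k" "is_cpair ord m mo a b (ps k)"
      using IH(3) ps_in_CPs[OF k] by blast
    then have "in_I m fs (spoly ord (ps k))"
      using in_I_spoly IH(1) by blast
    moreover have "(red1 ord m mo (Gs k))\<^sup>*\<^sup>* (spoly ord (ps k)) h"
      using new(4) by (simp add: reduces_to_def)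
    ultimately have "in_I m fs h"
      using in_I_red IH(1) by blast
    then have "\<forall>g\<in>Gs (Suc k). in_I m fs g"
      using new(6) IH(1) in_I_new_syz by blast
    moreover have "finite (Gs (Suc k))"
      using new(6) IH(2) finite_new_syz by simp
    moreover have "\<exists>a\<in>Gs (Suc k). \<exists>b\<in>Gs (Suc k). is_cpair ord m mo a b p"
      if "p \<in> CPs (Suc k)" for p
    proof -
      have "p \<in> CPs k \<or> p \<in> cpairs_of ord m mo {h} (Gs k) \<or> p \<in> cpairs_of ord m mo (Gs k) {h}"
        using that new(5) by blast
      then show ?thesis
        using IH(3) new(6) unfolding cpairs_of_def by blast
    qed
    ultimately show ?thesis
      by blast
  qed (use IH in simp)
qed

lemma in_I_Gs_N: "g \<in> Gs N \<Longrightarrow> in_I m fs g"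
  and finite_Gs_N: "finite (Gs N)"
  using run_invariants[of N] by auto

definition entry :: "('x, 'k) lpoly \<Rightarrow> nat" where
  "entry x = (LEAST j. x \<in> Gs j)"

lemma entry_le_N: "x \<in> Gs N \<Longrightarrow> entry x \<le> N"
  and in_Gs_entry: "x \<in> Gs N \<Longrightarrow> x \<in> Gs (entry x)"
  unfolding entry_def by (auto intro: Least_le LeastI)

lemma Gs_entry_mono: "x \<in> Gs N \<Longrightarrow> entry x \<le> k \<Longrightarrow> k \<le> N \<Longrightarrow> x \<in> Gs k"
  using in_Gs_entry Gs_mono by blast

lemma entry_Suc:
  assumes x: "x \<in> Gs N" "fst x \<noteq> 0" and k: "entry x = Suc k"
  shows "rs k = Some x"
    "\<forall>b\<in>Gs k. \<forall>p. is_cpair ord m mo x b p \<or> is_cpair ord m mo b x p \<longrightarrow> p \<in> CPs (Suc k)"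
proof -
  have "x \<notin> Gs k"
    using not_less_Least[of k "\<lambda>j. x \<in> Gs j"] k unfolding entry_def by simp
  moreover have "x \<in> Gs (Suc k)"
    using in_Gs_entry[OF x(1)] k by simp
  moreover have "k < N"
    using entry_le_N[OF x(1)] k by simp
  ultimately obtain h where "rs k = Some h" "x = h"
      "CPs (Suc k) = (CPs k - {ps k}) \<union> cpairs_of ord m mo {h} (Gs k) \<union> cpairs_of ord m mo (Gs k) {h}"
    using fst_new_syz x(2) by (cases rule: step_cases[rotated 2]) blast+
  then show "rs k = Some x"
    "\<forall>b\<in>Gs k. \<forall>p. is_cpair ord m mo x b p \<or> is_cpair ord m mo b x p \<longrightarrow> p \<in> CPs (Suc k)"
    unfolding cpairs_of_def by blast+
qed

lemma regular_pair_in_CPs: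
  assumes a: "a \<in> Gs N" and b: "b \<in> Gs N" and p: "is_cpair ord m mo a b p"
    and reg: "regular_cpair m mo p"
  shows "\<exists>j\<le>N. p \<in> CPs j"
proof -
  note a0 = is_cpairD(1)[OF p] and b0 = is_cpairD(2)[OF p]
  consider "entry a = entry b" | "entry a < entry b" | "entry b < entry a"
    by linarith
  then show ?thesis
  proof cases
    case 1
    show ?thesis
    proof (cases "entry a")
      case 0
      then have "a \<in> Gs 0" "b \<in> Gs 0"
        using 1 in_Gs_entry a b by metis+
      then show ?thesis
        using p Gs_0 CPs_0 unfolding cpairs_of_def by blast
    next
      case (Suc k)
      then have "a = b"
        using 1 entry_Suc(1)[OF a a0] entry_Suc(1)[OF b b0] by simp
      then show ?thesis
        using p reg is_cpair_self_not_regular by blast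
    qed
  next
    case 2
    then obtain k where k: "entry b = Suc k" "entry a \<le> k"
      by (cases "entry b") auto
    then have "Suc k \<le> N" "a \<in> Gs k"
      using entry_le_N[OF b] Gs_entry_mono[OF a] by simp_all
    then show ?thesis
      using entry_Suc(2)[OF b b0 k(1)] p by blast
  next
    case 3
    then obtain k where k: "entry a = Suc k" "entry b \<le> k"
      by (cases "entry a") auto
    then have "Suc k \<le> N" "b \<in> Gs k"
      using entry_le_N[OF a] Gs_entry_mono[OF b] by simp_all
    then show ?thesis
      using entry_Suc(2)[OF a a0 k(1)] p by blast
  qed
qed

text \<open>Termination and admissibility enter here.\<close>

lemma regular_pair_reduced:
  assumes a: "a \<in> Gs N" and b: "b \<in> Gs N" and p: "is_cpair ord m mo a b p"
    and reg: "regular_cpair m mo p" and not_rewritable: "\<not> cpair_gen_rewritable m mo lt (Gs N) p"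
  obtains h where "h \<in> Gs N" "lt h a" "sig m mo (snd h) = sig m mo (vmult (fst p) (snd a))"
proof -
  obtain j where "j \<le> N" "p \<in> CPs j"
    using regular_pair_in_CPs[OF a b p reg] by blast
  then obtain k where k: "k < N" "ps k = p"
    using pair_eventually_picked by blast
  have "Gs k \<subseteq> Gs N"
    using Gs_subset_Gs_N k(1) by simp
  then have not_rewritable_k: "\<not> cpair_gen_rewritable m mo lt (Gs k) p"
    using not_rewritable cpair_gen_rewritable_mono by blast
  obtain h where h: "rs k = Some h" "reduces_to ord m mo (Gs k) (spoly ord p) h"
      "Gs (Suc k) = Gs k \<union> {h} \<union> new_syz m fs h"
    using k(1) reg k(2) not_rewritable_k by (cases rule: step_cases) auto
  have "h \<in> Gs N"
    using h(3) Gs_subset_Gs_N[of "Suc k"] k(1) by auto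
  moreover have "lt h a"
  proof -
    have "lt h (fst (snd (ps k)))"
      using admissible k(1) h(1) unfolding admissible_run_def by blast
    then show ?thesis
      using k(2) is_cpairD(3)[OF p] by simp
  qed
  moreover have "sig m mo (snd h) = sig m mo (vmult (fst p) (snd a))"
  proof -
    have "(red1 ord m mo (Gs k))\<^sup>*\<^sup>* (spoly ord p) h"
      using h(2) by (simp add: reduces_to_def)
    then show ?thesis
      using sig_red sig_spoly[OF p reg] by metis
  qed
  ultimately show ?thesis
    using that by blast
qed

end

section \<open>Induction on signatures\<close>

context agc_admissible_run
begin

definition minimal_rewriter :: "'x pp \<times> nat \<Rightarrow> ('x, 'k) lpoly \<Rightarrow> bool" where
  "minimal_rewriter T g \<longleftrightarrow> g \<in> Gs N \<and> (\<exists>M. sig m mo (snd g) = Some M \<and> mdvd M T) \<and>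
     \<not> (\<exists>g'\<in>Gs N. \<exists>M'. sig m mo (snd g') = Some M' \<and> mdvd M' T \<and> lt g' g)"

definition reducible_below :: "('x, 'k) lpoly \<Rightarrow> 'x pp \<times> nat \<Rightarrow> bool" where
  "reducible_below x S \<longleftrightarrow> (\<exists>g\<in>Gs N. fst g \<noteq> 0 \<and> pp_dvd (lpp ord (fst g)) (lpp ord (fst x)) \<and>
     sig_less mo (sig m mo (vmult (pp_div (lpp ord (fst x)) (lpp ord (fst g))) (snd g))) (Some S))"

definition lpp_covered :: "'x pp \<times> nat \<Rightarrow> bool" where
  "lpp_covered T \<longleftrightarrow> (\<forall>a. in_I m fs a \<and> fst a \<noteq> 0 \<and> sig m mo (snd a) = Some T \<longrightarrow>
     (\<exists>g\<in>Gs N. fst g \<noteq> 0 \<and> pp_dvd (lpp ord (fst g)) (lpp ord (fst a)) \<and>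
        \<not> sig_less mo (Some T) (sig m mo (vmult (pp_div (lpp ord (fst a)) (lpp ord (fst g))) (snd g)))))"

definition rewriter_irreducible :: "'x pp \<times> nat \<Rightarrow> bool" where
  "rewriter_irreducible T \<longleftrightarrow> (\<forall>g t. minimal_rewriter T g \<and> fst g \<noteq> 0 \<and>
     sig m mo (vmult t (snd g)) = Some T \<longrightarrow> \<not> reducible_below (lscale 1 t g) T)"

lemma reducible_below_lpp_cong:
  "lpp ord (fst x) = lpp ord (fst y) \<Longrightarrow> reducible_below x S \<longleftrightarrow> reducible_below y S"
  by (simp add: reducible_below_def)

lemma in_I_sig_Some:
  assumes "in_I m fs a" "fst a \<noteq> 0"
  obtains S where "sig m mo (snd a) = Some S"
  using in_I_msupp_nonempty[OF assms] by (cases "sig m mo (snd a)") (auto simp: sig_eq_None_iff)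

lemma sig_unitv:
  assumes "i < m"
  shows "sig m mo (unitv i :: ('x, 'k) vec) = Some (0, i)"
proof -
  have "msupp m (unitv i :: ('x, 'k) vec) = {(0, i)}"
    using assms by (auto simp: msupp_def unitv_def)
  then show ?thesis
    using mo_refl[of "(0, i)"] assms by (intro sig_eqI) simp_all
qed

lemma exists_minimal_rewriter:
  assumes T: "snd T < m"
  obtains g t where "minimal_rewriter T g" "sig m mo (vmult t (snd g)) = Some T"
proof -
  define A where "A = {g\<in>Gs N. \<exists>M. sig m mo (snd g) = Some M \<and> mdvd M T}"
  have "(fs (snd T), unitv (snd T)) \<in> Gs N"
    using Gs_0 Gs_subset_Gs_N[of 0] T by (auto simp: G_init_def)
  then have "(fs (snd T), unitv (snd T)) \<in> A"
    using sig_unitv[OF T] unfolding A_def by (simp add: mdvd_def pp_dvd_def)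
  then have "A \<noteq> {}"
    by blast
  moreover have "finite A"
    unfolding A_def using finite_Gs_N by simp
  moreover have "\<forall>x\<in>A. \<not> lt x x" "\<forall>x\<in>A. \<forall>y\<in>A. \<forall>z\<in>A. lt x y \<longrightarrow> lt y z \<longrightarrow> lt x z"
    using strict_po unfolding strict_po_on_def A_def by blast+
  ultimately obtain g where g: "g \<in> A" "\<forall>g'\<in>A. \<not> lt g' g"
    using finite_has_minimal_wrt[of A lt] by blast
  then obtain M where M: "sig m mo (snd g) = Some M" "mdvd M T"
    unfolding A_def by blast
  have "minimal_rewriter T g"
    using g unfolding minimal_rewriter_def A_def by blast
  obtain t where "fst T = fst M + t"
    using M(2) by (auto simp: mdvd_def pp_dvd_iff)
  then have "T = shift t M"
    using M(2) by (simp add: shift_def mdvd_def prod_eq_iff add.commute)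
  then have "sig m mo (vmult t (snd g)) = Some T"
    using M(1) by (simp add: sig_vmult)
  with \<open>minimal_rewriter T g\<close> show ?thesis
    by (rule that)
qed

lemma minimal_rewriter_not_gen_rewritable:
  assumes "minimal_rewriter T g" "sig m mo (vmult t (snd g)) = Some M" "mdvd M T"
  shows "\<not> gen_rewritable m mo lt (Gs N) t g"
proof
  assume "gen_rewritable m mo lt (Gs N) t g"
  then obtain b M' where "b \<in> Gs N" "sig m mo (snd b) = Some M'" "mdvd M' M" "lt b g"
    using assms(2) unfolding gen_rewritable_def by auto
  then show False
    using assms(1,3) mdvd_trans unfolding minimal_rewriter_def by blast
qed

text \<open>A regular pair of minimal rewriters survives the criterion, so its reduction would be a
  smaller rewriter.\<close>

lemma minimal_rewriters_lpp_distinct: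
  assumes g: "minimal_rewriter T g" "fst g \<noteq> 0" "sig m mo (vmult t (snd g)) = Some T"
    and g': "minimal_rewriter S g'" "fst g' \<noteq> 0" "sig m mo (vmult s (snd g')) = Some S"
    and ST: "mo S T" "S \<noteq> T"
  shows "lpp ord (fst g) + t \<noteq> lpp ord (fst g') + s"
proof
  assume "lpp ord (fst g) + t = lpp ord (fst g') + s"
  then obtain tf tg M M' where p: "is_cpair ord m mo g g' (tf, g, tg, g')"
      "regular_cpair m mo (tf, g, tg, g')"
      and M: "sig m mo (vmult tf (snd g)) = Some M" "mdvd M T"
      and M': "sig m mo (vmult tg (snd g')) = Some M'" "mdvd M' S"
    using regular_cpair_of_common_multiple[OF g(2) g'(2) g(3) g'(3) ST] by blast
  have "\<not> cpair_gen_rewritable m mo lt (Gs N) (tf, g, tg, g')"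
    using minimal_rewriter_not_gen_rewritable[OF g(1) M] minimal_rewriter_not_gen_rewritable[OF g'(1) M']
    by (simp add: cpair_gen_rewritable_def)
  moreover have "g \<in> Gs N" "g' \<in> Gs N"
    using g(1) g'(1) unfolding minimal_rewriter_def by blast+
  ultimately obtain h where "h \<in> Gs N" "lt h g" "sig m mo (snd h) = Some M"
    using regular_pair_reduced[OF _ _ p] M(1) by auto
  then show False
    using g(1) M(2) unfolding minimal_rewriter_def by blast
qed

lemma reducible_below_of_smaller_sig:
  assumes IH: "\<And>S'. (S', S) \<in> module_less \<Longrightarrow> lpp_covered S'" and S: "snd S < m"
    and d: "in_I m fs d" "fst d \<noteq> 0" "sig_less mo (sig m mo (snd d)) (Some S)"
  shows "reducible_below d S"
proof -
  obtain S' where S': "sig m mo (snd d) = Some S'"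
    using in_I_sig_Some d(1,2) by blast
  then have less: "sig_less mo (Some S') (Some S)"
    using d(3) by simp
  then have "lpp_covered S'"
    using IH S sig_index[OF S'] by (simp add: module_less_def)
  then obtain g where "g \<in> Gs N" "fst g \<noteq> 0" "pp_dvd (lpp ord (fst g)) (lpp ord (fst d))"
    "\<not> sig_less mo (Some S') (sig m mo (vmult (pp_div (lpp ord (fst d)) (lpp ord (fst g))) (snd g)))"
    using d(1,2) S' unfolding lpp_covered_def by blast
  then show ?thesis
    unfolding reducible_below_def
    using sig_le_less_trans[OF sig_valid_Some[OF sig_index[OF S']] sig_valid_sig sig_valid_Some[OF S]] less
    by blast
qed

text \<open>Cancelling the common signature of \<open>x\<close> and \<open>z\<close> leaves a polynomial of smaller signature,
  which is covered; its leading power product is that of \<open>x\<close> or of \<open>z\<close> unless these agree.\<close>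

lemma same_sig_lpp_eq_or_reducible:
  assumes IH: "\<And>S'. (S', S) \<in> module_less \<Longrightarrow> lpp_covered S'"
    and x: "in_I m fs x" "fst x \<noteq> 0" "sig m mo (snd x) = Some S"
    and z: "in_I m fs z" "sig m mo (snd z) = Some S"
  shows "(fst z \<noteq> 0 \<and> lpp ord (fst z) = lpp ord (fst x)) \<or> reducible_below x S
    \<or> (fst z \<noteq> 0 \<and> reducible_below z S)"
proof -
  have iS: "snd S < m"
    using sig_index[OF x(3)] .
  obtain c where c: "c \<noteq> 0"
    and less: "sig_less mo (sig m mo (\<lambda>i. snd x i - Poly_Mapping.single 0 c * snd z i)) (Some S)"
    using sig_cancel[OF x(3) z(2)] by blast
  define d where "d = lsub x (lscale c 0 z)"
  have fst_d: "fst d = fst x - Poly_Mapping.single 0 c * fst z"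
    by (simp add: d_def fst_lsub fst_lscale)
  have "in_I m fs d"
    unfolding d_def by (intro in_I_lsub in_I_lscale x(1) z(1))
  moreover have "sig_less mo (sig m mo (snd d)) (Some S)"
    using less by (simp add: d_def snd_lsub snd_lscale)
  ultimately have red_d: "reducible_below d S" if "fst d \<noteq> 0"
    using reducible_below_of_smaller_sig[OF IH iS] that by blast
  show ?thesis
  proof (cases "fst z = 0")
    case True
    then have "fst d = fst x"
      by (simp add: fst_d)
    then show ?thesis
      using red_d x(2) reducible_below_lpp_cong[of d x S] by simp
  next
    case z0: False
    have cz: "Poly_Mapping.single 0 c * fst z \<noteq> 0" "lpp ord (Poly_Mapping.single 0 c * fst z) = lpp ord (fst z)"
      using single_mult_eq_0_iff[OF c, of 0 "fst z"] z0 lpp_single_mult[OF c z0, of 0] by auto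
    show ?thesis
    proof (cases "lpp ord (fst z) = lpp ord (fst x)")
      case False
      then have "fst d \<noteq> 0" "lpp ord (fst d) = lpp ord (fst x) \<or> lpp ord (fst d) = lpp ord (fst z)"
        using lpp_diff_neq[OF x(2) cz(1)] cz(2) by (simp_all add: fst_d)
      then show ?thesis
        using red_d reducible_below_lpp_cong[of d x S] reducible_below_lpp_cong[of d z S] z0 by blast
    qed (use z0 in simp)
  qed
qed

lemma exists_minimal_reducer:
  assumes "reducible_below b T" "snd T < m"
  obtains h where "h \<in> Gs N" "fst h \<noteq> 0" "pp_dvd (lpp ord (fst h)) (lpp ord (fst b))"
    "sig_less mo (sig m mo (vmult (pp_div (lpp ord (fst b)) (lpp ord (fst h))) (snd h))) (Some T)"
    "\<And>g. g \<in> Gs N \<Longrightarrow> fst g \<noteq> 0 \<Longrightarrow> pp_dvd (lpp ord (fst g)) (lpp ord (fst b)) \<Longrightarrow>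
       \<not> sig_less mo (sig m mo (vmult (pp_div (lpp ord (fst b)) (lpp ord (fst g))) (snd g)))
           (sig m mo (vmult (pp_div (lpp ord (fst b)) (lpp ord (fst h))) (snd h)))"
proof -
  define \<sigma> where "\<sigma> g = sig m mo (vmult (pp_div (lpp ord (fst b)) (lpp ord (fst g))) (snd g))"
    for g :: "('x, 'k) lpoly"
  define H where "H = {g \<in> Gs N. fst g \<noteq> 0 \<and> pp_dvd (lpp ord (fst g)) (lpp ord (fst b)) \<and>
      sig_less mo (\<sigma> g) (Some T)}"
  have "H \<noteq> {}"
    using assms(1) unfolding reducible_below_def H_def \<sigma>_def by blast
  moreover have "finite H"
    using finite_Gs_N unfolding H_def by simp
  moreover note sig_less_trans[OF sig_valid_sig sig_valid_sig sig_valid_sig]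
  ultimately obtain h where h: "h \<in> H" "\<forall>g\<in>H. \<not> sig_less mo (\<sigma> g) (\<sigma> h)"
    using finite_has_minimal_wrt[of H "\<lambda>g h. sig_less mo (\<sigma> g) (\<sigma> h)"] sig_less_irrefl
    unfolding \<sigma>_def by blast
  have "\<not> sig_less mo (\<sigma> g) (\<sigma> h)"
    if "g \<in> Gs N" "fst g \<noteq> 0" "pp_dvd (lpp ord (fst g)) (lpp ord (fst b))" for g
  proof
    assume less: "sig_less mo (\<sigma> g) (\<sigma> h)"
    then have "sig_less mo (\<sigma> g) (Some T)"
      using h(1) sig_less_trans[OF sig_valid_sig sig_valid_sig sig_valid_Some[OF assms(2)]]
      unfolding H_def \<sigma>_def by blast
    then show False
      using that h less unfolding H_def by blast
  qed
  then show ?thesis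
    using that h(1) unfolding H_def \<sigma>_def by blast
qed

lemma minimal_rewriter_multiple:
  assumes "minimal_rewriter T g" "sig m mo (vmult t (snd g)) = Some T"
  shows "in_I m fs (lscale 1 t g)" "sig m mo (snd (lscale 1 t g)) = Some T"
    and "fst (lscale 1 t g) \<noteq> 0 \<Longrightarrow> fst g \<noteq> 0"
proof -
  have "g \<in> Gs N"
    using assms(1) unfolding minimal_rewriter_def by blast
  then show "in_I m fs (lscale 1 t g)" "sig m mo (snd (lscale 1 t g)) = Some T"
    using assms(2) by (simp_all add: in_I_lscale in_I_Gs_N snd_lscale1)
qed (auto simp: fst_lscale)

lemma exists_irreducible_reducer_multiple:
  assumes red: "reducible_below b T" and T: "snd T < m"
  obtains hs S where "in_I m fs hs" "fst hs \<noteq> 0" "lpp ord (fst hs) = lpp ord (fst b)"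
    "sig m mo (snd hs) = Some S" "(S, T) \<in> module_less" "\<not> reducible_below hs S"
proof -
  obtain h where h: "h \<in> Gs N" "fst h \<noteq> 0" "pp_dvd (lpp ord (fst h)) (lpp ord (fst b))"
    and hT: "sig_less mo (sig m mo (vmult (pp_div (lpp ord (fst b)) (lpp ord (fst h))) (snd h))) (Some T)"
    and hmin: "\<And>g. g \<in> Gs N \<Longrightarrow> fst g \<noteq> 0 \<Longrightarrow> pp_dvd (lpp ord (fst g)) (lpp ord (fst b)) \<Longrightarrow>
       \<not> sig_less mo (sig m mo (vmult (pp_div (lpp ord (fst b)) (lpp ord (fst g))) (snd g)))
           (sig m mo (vmult (pp_div (lpp ord (fst b)) (lpp ord (fst h))) (snd h)))"
    using exists_minimal_reducer[OF red T] by blast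
  define s where "s = pp_div (lpp ord (fst b)) (lpp ord (fst h))"
  obtain S0 where "sig m mo (snd h) = Some S0"
    using in_I_sig_Some in_I_Gs_N h(1,2) by blast
  then obtain S where S: "sig m mo (vmult s (snd h)) = Some S"
    by (simp add: sig_vmult)
  have ST: "(S, T) \<in> module_less"
    using hT S T sig_index[OF S] by (simp add: s_def module_less_def)
  define hs where "hs = lscale 1 s h"
  have hs: "in_I m fs hs" "fst hs \<noteq> 0" "lpp ord (fst hs) = lpp ord (fst b)" "sig m mo (snd hs) = Some S"
    using in_I_lscale[OF in_I_Gs_N[OF h(1)], of 1 s] fst_lscale_eq_0_iff[of 1 s h] h(2)
      lpp_lscale[OF h(2), of 1 s] add_pp_div[OF h(3)] S
    by (simp_all add: hs_def s_def snd_lscale1 add.commute)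
  have "\<not> reducible_below hs S"
  proof
    assume "reducible_below hs S"
    then obtain g where "g \<in> Gs N" "fst g \<noteq> 0" "pp_dvd (lpp ord (fst g)) (lpp ord (fst b))"
      "sig_less mo (sig m mo (vmult (pp_div (lpp ord (fst b)) (lpp ord (fst g))) (snd g))) (Some S)"
      unfolding reducible_below_def hs(3) by blast
    then show False
      using hmin S by (simp add: s_def)
  qed
  with hs ST show ?thesis
    by (rule that)
qed

lemma rewriter_irreducible_step:
  assumes T: "snd T < m"
    and IH: "\<And>S. (S, T) \<in> module_less \<Longrightarrow> lpp_covered S \<and> rewriter_irreducible S"
  shows "rewriter_irreducible T"
  unfolding rewriter_irreducible_def
proof (intro allI impI notI, elim conjE)
  fix g t
  assume g: "minimal_rewriter T g" "fst g \<noteq> 0" "sig m mo (vmult t (snd g)) = Some T"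
    and red: "reducible_below (lscale 1 t g) T"
  obtain hs S where hs: "in_I m fs hs" "fst hs \<noteq> 0" "sig m mo (snd hs) = Some S"
    and lpp_hs: "lpp ord (fst hs) = lpp ord (fst (lscale 1 t g))"
    and ST: "(S, T) \<in> module_less" and hs_irreducible: "\<not> reducible_below hs S"
    using exists_irreducible_reducer_multiple[OF red T] by blast
  have IH_S: "lpp_covered S'" if "(S', S) \<in> module_less" for S'
    using IH that ST trans_module_less by (meson transD)
  obtain g' s' where g': "minimal_rewriter S g'" "sig m mo (vmult s' (snd g')) = Some S"
    using exists_minimal_rewriter sig_index[OF hs(3)] by blast
  note z = minimal_rewriter_multiple[OF g']
  consider (same_lpp) "fst (lscale 1 s' g') \<noteq> 0" "lpp ord (fst (lscale 1 s' g')) = lpp ord (fst hs)"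
    | (z_reducible) "fst (lscale 1 s' g') \<noteq> 0" "reducible_below (lscale 1 s' g') S"
    using same_sig_lpp_eq_or_reducible[OF IH_S hs(1,2,3) z(1,2)] hs_irreducible by blast
  then show False
  proof cases
    case same_lpp
    then have "lpp ord (fst g) + t = lpp ord (fst g') + s'"
      using lpp_hs lpp_lscale[OF g(2)] lpp_lscale[OF z(3)] by (simp add: add.commute)
    then show False
      using minimal_rewriters_lpp_distinct[OF g g'(1) z(3) g'(2)] same_lpp(1) ST
      by (simp add: module_less_def)
  next
    case z_reducible
    then show False
      using IH[OF ST] g' z(3) unfolding rewriter_irreducible_def by blast
  qed
qed

lemma lpp_covered_step:
  assumes T: "snd T < m"
    and IH: "\<And>S. (S, T) \<in> module_less \<Longrightarrow> lpp_covered S"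
    and irreducible: "rewriter_irreducible T"
  shows "lpp_covered T"
  unfolding lpp_covered_def
proof (intro allI impI, elim conjE)
  fix a
  assume a: "in_I m fs a" "fst a \<noteq> 0" "sig m mo (snd a) = Some T"
  obtain g t where g: "minimal_rewriter T g" "sig m mo (vmult t (snd g)) = Some T"
    using exists_minimal_rewriter[OF T] by blast
  define z where "z = lscale 1 t g"
  note z = minimal_rewriter_multiple[OF g, folded z_def]
  consider (same_lpp) "fst z \<noteq> 0" "lpp ord (fst z) = lpp ord (fst a)"
    | (a_reducible) "reducible_below a T"
    | (z_reducible) "fst z \<noteq> 0" "reducible_below z T"
    using same_sig_lpp_eq_or_reducible[OF IH a z(1,2)] by blast
  then show "\<exists>g\<in>Gs N. fst g \<noteq> 0 \<and> pp_dvd (lpp ord (fst g)) (lpp ord (fst a)) \<and>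
      \<not> sig_less mo (Some T) (sig m mo (vmult (pp_div (lpp ord (fst a)) (lpp ord (fst g))) (snd g)))"
  proof cases
    case same_lpp
    then have g0: "fst g \<noteq> 0"
      using z(3) by blast
    then have "lpp ord (fst a) = lpp ord (fst g) + t"
      using same_lpp lpp_lscale[OF g0] by (simp add: z_def add.commute)
    then show ?thesis
      using g g0 sig_less_irrefl unfolding minimal_rewriter_def by auto
  next
    case a_reducible
    then show ?thesis
      unfolding reducible_below_def using sig_less_asym[OF sig_valid_sig sig_valid_Some[OF T]] by blast
  next
    case z_reducible
    then show ?thesis
      using irreducible g z(3) unfolding rewriter_irreducible_def z_def by blast
  qed
qed

lemma lpp_covered_and_rewriter_irreducible:
  "snd T < m \<Longrightarrow> lpp_covered T \<and> rewriter_irreducible T"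
proof (induction T rule: wf_induct_rule[OF wf_module_less, case_names less])
  case (less T)
  have IH: "lpp_covered S \<and> rewriter_irreducible S" if "(S, T) \<in> module_less" for S
    using less.IH that by (simp add: module_less_def)
  then have "rewriter_irreducible T"
    using rewriter_irreducible_step[OF less.prems] by blast
  then show ?case
    using lpp_covered_step[OF less.prems] IH by blast
qed

end

theorem theorem3p1:
  fixes ord :: "('x::finite) pp \<Rightarrow> 'x pp \<Rightarrow> bool"
    and mo :: "'x pp \<times> nat \<Rightarrow> 'x pp \<times> nat \<Rightarrow> bool"
    and m :: nat
    and fs :: "('x, 'k::field) vec"
    and lt :: "('x, 'k) lpoly \<Rightarrow> ('x, 'k) lpoly \<Rightarrow> bool"
    and N :: nat
    and Gs :: "nat \<Rightarrow> ('x, 'k) lpoly set"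
    and CPs :: "nat \<Rightarrow> ('x, 'k) cpair set"
    and ps :: "nat \<Rightarrow> ('x, 'k) cpair"
    and rs :: "nat \<Rightarrow> ('x, 'k) lpoly option"
  assumes "term_order ord"
    and "module_term_order m mo"
    and "agc_run ord m mo fs lt N Gs CPs ps rs"
    and "strict_po_on (Gs N) lt"
    and "admissible_run N lt ps rs"
  shows "labeled_GB ord m mo fs (Gs N)"
proof -
  interpret agc_admissible_run ord mo m fs lt N Gs CPs ps rs
    using assms by unfold_locales
  have "\<exists>g\<in>Gs N. fst g \<noteq> 0 \<and> pp_dvd (lpp ord (fst g)) (lpp ord (fst a)) \<and>
      \<not> sig_less mo (sig m mo (snd a)) (sig m mo (vmult (pp_div (lpp ord (fst a)) (lpp ord (fst g))) (snd g)))"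
    if a: "in_I m fs a" "fst a \<noteq> 0" for a
  proof -
    obtain T where T: "sig m mo (snd a) = Some T"
      using in_I_sig_Some[OF a] .
    then have "lpp_covered T"
      using lpp_covered_and_rewriter_irreducible[OF sig_index[OF T]] by blast
    then have "\<exists>g\<in>Gs N. fst g \<noteq> 0 \<and> pp_dvd (lpp ord (fst g)) (lpp ord (fst a)) \<and>
        \<not> sig_less mo (Some T) (sig m mo (vmult (pp_div (lpp ord (fst a)) (lpp ord (fst g))) (snd g)))"
      using a T unfolding lpp_covered_def by blast
    then show ?thesis
      using T by simp
  qed
  then show ?thesis
    unfolding labeled_GB_def using finite_Gs_N in_I_Gs_N by blast
qed

end
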